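(* In the setting below, for each $k\in[d-1]$, let $P_k(t)$ be the orthogonal projector onto the row space of $c_{TT}(t)^{<k>}$, so that $P_k(t)=\tilde X_{\ge k+1}(t)\tilde X_{\ge k+1}(t)^\top$ for the right interface matrix of any minimal right-orthogonal TT decomposition of $c_{TT}(t)$. Then \[\frac{d}{dt}P_k(t)\Big|_{t=0}=(I-\tilde X_{\ge k+1}\tilde X_{\ge k+1}^\top)V_{\ge k+1}R_k^{-1}\tilde X_{\ge k+1}^\top+\tilde X_{\ge k+1}R_k^{-\top}V_{\ge k+1}^\top(I-\tilde X_{\ge k+1}\tilde X_{\ge k+1}^\top),\] where $I=I_{n_{k+1}\cdots n_d}$.
   Context: Fix $d\ge2$, positive integers $n_1,\dots,n_d$, $\mathbf r=(r_1,\dots,r_{d-1})$, $r_0=r_d=1$. Flattenings $Z^{<\mu>}\in\mathbb R^{(n_1\cdots n_\mu)\times(n_{\mu+1}\cdots n_d)}$ use colexicographic order; $\mathcal M_{\mathbf r}$ is the manifold of tensors of TT-rank $(\mathrm{rank}\,Z^{<1>},\dots,\mathrm{rank}\,Z^{<d-1>})=\mathbf r$. $X\in\mathcal M_{\mathbf r}$ has a minimal left-orthogonal TT decomposition $U_1,\dots,U_d$ ($U_k\in\mathbb R^{r_{k-1}\times n_k\times r_k}$, $X(i_1,\dots,i_d)=U_1(i_1)\cdots U_d(i_d)$, $(U_k^L)^\top U_k^L=I$ for $k<d$, $U^L:=U^{<2>}$, $U^R:=U^{<1>}$) and a minimal right-orthogonal decomposition $\tilde U_1,\dots,\tilde U_d$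 ($\tilde U_k^R(\tilde U_k^R)^\top=I$, $k\ge2$). Right interface matrices: $X_{\ge d+1}=1$, $X_{\ge k}^\top=U_k^R(X_{\ge k+1}^\top\otimes I_{n_k})$, and $\tilde X_{\ge k}$ likewise from $\tilde U_k$; $R_k\in\mathbb R^{r_k\times r_k}$ is the invertible matrix with $X_{\ge k+1}=\tilde X_{\ge k+1}R_k$. $V\in\mathrm T_X\mathcal M_{\mathbf r}$ is given by cores $\delta V_k$, $V=\sum_kU_1(i_1)\cdots U_{k-1}(i_{k-1})\delta V_k(i_k)U_{k+1}(i_{k+1})\cdots U_d(i_d)$, $(\delta V_k^L)^\top U_k^L=0$ for $k<d$; $V_{\ge d+1}=0$, $V_{\ge k}^\top=U_k^R(V_{\ge k+1}^\top\otimes I_{n_k})+\delta V_k^R(X_{\ge k+1}^\top\otimes I_{n_k})$. $c_1,\dots,c_d$ are smooth core curves on $(-\epsilon,\epsilon)$ with $c_k(t)=U_k+t\,\delta V_k+O(t^2)$ ($k<d$), $c_d(t)=U_d+t\,\delta V_d$, forming for each $t$ a minimal left-orthogonal TT decomposition of $c_{TT}(t)\in\mathcal M_{\mathbf r}$, where $c_{TT}(t)(i_1,\dots,i_d)=c_1(t)(i_1)\cdots c_d(t)(i_d)$. *)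

theory Defs
  imports "HOL-Analysis.Analysis" "HOL-Library.Landau_Symbols"
    "Jordan_Normal_Form.DL_Rank"
begin

text \<open>A tensor of order d is a function on index lists; a valid
multi-index is a list of length d whose (0-based) k-th entry is < n (k+1).
Mode sizes are n 1, ..., n d; TT ranks r 0, ..., r d. A TT core number k is a family
of slices C i (i < n k), each an r (k-1) x r k matrix. Slice/row/column
indices are 0-based.\<close>

type_synonym tensor = "nat list \<Rightarrow> real"
type_synonym core = "nat \<Rightarrow> real mat"

definition core_dims :: "nat \<Rightarrow> nat \<Rightarrow> nat \<Rightarrow> core \<Rightarrow> bool" where
  "core_dims rl nk rr C \<longleftrightarrow> (\<forall>i<nk. C i \<in> carrier_mat rl rr)"

text \<open>Colexicographic decoding of a linear index (first index runs fastest).\<close>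
fun colex_decode :: "nat list \<Rightarrow> nat \<Rightarrow> nat list" where
  "colex_decode [] m = []"
| "colex_decode (s # ss) m = (m mod s) # colex_decode ss (m div s)"

definition flat :: "(nat \<Rightarrow> nat) \<Rightarrow> nat \<Rightarrow> nat \<Rightarrow> tensor \<Rightarrow> real mat" where
  "flat n d \<mu> Z = mat (\<Prod>j\<in>{1..\<mu>}. n j) (\<Prod>j\<in>{\<mu>+1..d}. n j)
     (\<lambda>(a,b). Z (colex_decode (map n [1..<\<mu>+1]) a @ colex_decode (map n [\<mu>+1..<d+1]) b))"

definition in_Mr :: "(nat \<Rightarrow> nat) \<Rightarrow> nat \<Rightarrow> (nat \<Rightarrow> nat) \<Rightarrow> tensor \<Rightarrow> bool" where
  "in_Mr n d r Z \<longleftrightarrow> (\<forall>k\<in>{1..d-1}. vec_space.rank (\<Prod>j\<in>{1..k}. n j) (flat n d k Z) = r k)"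

definition tt :: "nat \<Rightarrow> (nat \<Rightarrow> core) \<Rightarrow> tensor" where
  "tt d C idx = (foldr (\<lambda>k M. C k (idx ! (k-1)) * M) [1..<d+1] (1\<^sub>m 1)) $$ (0,0)"

text \<open>Unfoldings of a core: U^L = U^{<2>} and U^R = U^{<1>} (colex order).\<close>
definition unfoldL :: "nat \<Rightarrow> nat \<Rightarrow> nat \<Rightarrow> core \<Rightarrow> real mat" where
  "unfoldL rl nk rr C = mat (rl * nk) rr (\<lambda>(p,b). C (p div rl) $$ (p mod rl, b))"

definition unfoldR :: "nat \<Rightarrow> nat \<Rightarrow> nat \<Rightarrow> core \<Rightarrow> real mat" where
  "unfoldR rl nk rr C = mat rl (nk * rr) (\<lambda>(a,q). C (q mod nk) $$ (a, q div nk))"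

definition left_orth :: "nat \<Rightarrow> nat \<Rightarrow> nat \<Rightarrow> core \<Rightarrow> bool" where
  "left_orth rl nk rr C \<longleftrightarrow> transpose_mat (unfoldL rl nk rr C) * unfoldL rl nk rr C = 1\<^sub>m rr"

definition right_orth :: "nat \<Rightarrow> nat \<Rightarrow> nat \<Rightarrow> core \<Rightarrow> bool" where
  "right_orth rl nk rr C \<longleftrightarrow> unfoldR rl nk rr C * transpose_mat (unfoldR rl nk rr C) = 1\<^sub>m rl"

definition kron :: "real mat \<Rightarrow> real mat \<Rightarrow> real mat" where
  "kron A B = mat (dim_row A * dim_row B) (dim_col A * dim_col B)
     (\<lambda>(i,j). A $$ (i div dim_row B, j div dim_col B) * B $$ (i mod dim_row B, j mod dim_col B))"

text \<open>XT C n r j k = (X_{>=k})^T computed by j recursion steps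
  X_{>=k}^T = C_k^R (X_{>=k+1}^T \<otimes> I_{n_k}), starting from X_{>=d+1} = 1.\<close>
primrec XT :: "(nat \<Rightarrow> core) \<Rightarrow> (nat \<Rightarrow> nat) \<Rightarrow> (nat \<Rightarrow> nat) \<Rightarrow> nat \<Rightarrow> nat \<Rightarrow> real mat" where
  "XT C n r 0 k = 1\<^sub>m 1"
| "XT C n r (Suc j) k = unfoldR (r (k-1)) (n k) (r k) (C k) * kron (XT C n r j (Suc k)) (1\<^sub>m (n k))"

definition Xge :: "(nat \<Rightarrow> core) \<Rightarrow> (nat \<Rightarrow> nat) \<Rightarrow> (nat \<Rightarrow> nat) \<Rightarrow> nat \<Rightarrow> nat \<Rightarrow> real mat" where
  "Xge C n r d k = transpose_mat (XT C n r (d + 1 - k) k)"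

primrec VT :: "(nat \<Rightarrow> core) \<Rightarrow> (nat \<Rightarrow> core) \<Rightarrow> (nat \<Rightarrow> nat) \<Rightarrow> (nat \<Rightarrow> nat) \<Rightarrow> nat \<Rightarrow> nat \<Rightarrow> real mat" where
  "VT C dC n r 0 k = 0\<^sub>m 1 1"
| "VT C dC n r (Suc j) k =
     unfoldR (r (k-1)) (n k) (r k) (C k) * kron (VT C dC n r j (Suc k)) (1\<^sub>m (n k))
   + unfoldR (r (k-1)) (n k) (r k) (dC k) * kron (XT C n r j (Suc k)) (1\<^sub>m (n k))"

definition Vge :: "(nat \<Rightarrow> core) \<Rightarrow> (nat \<Rightarrow> core) \<Rightarrow> (nat \<Rightarrow> nat) \<Rightarrow> (nat \<Rightarrow> nat) \<Rightarrow> nat \<Rightarrow> nat \<Rightarrow> real mat" where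
  "Vge C dC n r d k = transpose_mat (VT C dC n r (d + 1 - k) k)"

definition row_space :: "real mat \<Rightarrow> real vec set" where
  "row_space A = {transpose_mat A *\<^sub>v x | x. x \<in> carrier_vec (dim_row A)}"

definition orth_proj_rows :: "real mat \<Rightarrow> real mat" where
  "orth_proj_rows A = (THE P. P \<in> carrier_mat (dim_col A) (dim_col A) \<and> transpose_mat P = P \<and>
      P * P = P \<and> (\<forall>v\<in>carrier_vec (dim_col A). P *\<^sub>v v \<in> row_space A) \<and>
      (\<forall>w\<in>row_space A. P *\<^sub>v w = w))"

definition C_inf_on :: "real set \<Rightarrow> (real \<Rightarrow> real) \<Rightarrow> bool" where
  "C_inf_on S g \<longleftrightarrow> (\<exists>D :: nat \<Rightarrow> real \<Rightarrow> real. D 0 = g \<and>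
      (\<forall>j. \<forall>t\<in>S. (D j has_real_derivative D (Suc j) t) (at t)))"

end

theory Submission
  imports Defs
begin

(* For a tensor train with left-orthogonal cores C_1, ..., C_d the k-th flattening factors as
   X_{<=k} X_{>=k+1}^T, where X_{<=k} has orthonormal columns, so its row space is the column
   space of B = X_{>=k+1} R^{-1}.  Along the curve, B(t) = X_{>=k+1}(t) R^{-1} is differentiable
   with B'(0) = V_{>=k+1} R^{-1} (product rule on the interface recursion), and B(0) is the
   orthonormal matrix Xt_{>=k+1}.  Hence P_k(t) = B (B^T B)^{-1} B^T near 0; at t = 0 the Gram
   matrix is the identity and its inverse has derivative -(B'^T B + B^T B'), and the product
   rule gives the stated formula. *)

subsection \<open>Matrix algebra with dimension side conditions\<close>

lemma mult_add_distrib_mat_dims: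
  "dim_col A = dim_row B \<Longrightarrow> dim_row B = dim_row C \<Longrightarrow> dim_col B = dim_col C \<Longrightarrow>
    A * (B + C) = A * B + (A :: 'a :: semiring_0 mat) * C"
  by (rule mult_add_distrib_mat[of _ "dim_row A" "dim_col A" _ "dim_col B"]) auto

lemma add_mult_distrib_mat_dims:
  "dim_row A = dim_row B \<Longrightarrow> dim_col A = dim_col B \<Longrightarrow> dim_col A = dim_row C \<Longrightarrow>
    (A + B) * C = A * C + (B :: 'a :: semiring_0 mat) * C"
  by (rule add_mult_distrib_mat[of _ "dim_row A" "dim_col A" _ _ "dim_col C"]) auto

lemma mult_minus_distrib_mat_dims:
  "dim_col A = dim_row B \<Longrightarrow> dim_row B = dim_row C \<Longrightarrow> dim_col B = dim_col C \<Longrightarrow>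
    A * (B - C) = A * B - (A :: 'a :: ring mat) * C"
  by (rule mult_minus_distrib_mat[of _ "dim_row A" "dim_col A" _ "dim_col B"]) auto

lemma minus_mult_distrib_mat_dims:
  "dim_row A = dim_row B \<Longrightarrow> dim_col A = dim_col B \<Longrightarrow> dim_col A = dim_row C \<Longrightarrow>
    (A - B) * C = A * C - (B :: 'a :: ring mat) * C"
  by (rule minus_mult_distrib_mat[of _ "dim_row A" "dim_col A" _ _ "dim_col C"]) auto

lemma assoc_mult_mat_dims:
  "dim_col A = dim_row B \<Longrightarrow> dim_col B = dim_row C \<Longrightarrow> A * B * C = A * (B * (C :: 'a :: semiring_0 mat))"
  by (rule assoc_mult_mat[of _ "dim_row A" "dim_col A" _ "dim_col B" _ "dim_col C"]) auto

lemma comm_add_mat_dims: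
  "dim_row A = dim_row B \<Longrightarrow> dim_col A = dim_col B \<Longrightarrow> A + B = B + (A :: 'a :: ab_semigroup_add mat)"
  by (rule eq_matI) (auto simp: add.commute)

lemma assoc_mult_mat_vec_dims:
  "dim_col A = dim_row B \<Longrightarrow> dim_col B = dim_vec v \<Longrightarrow> A * B *\<^sub>v v = A *\<^sub>v (B *\<^sub>v (v :: 'a :: semiring_0 vec))"
  by (rule assoc_mult_mat_vec[of _ "dim_row A" "dim_col A" _ "dim_col B"]) auto

lemma transpose_mult_dims: "dim_col A = dim_row B \<Longrightarrow> (A * B)\<^sup>T = B\<^sup>T * (A\<^sup>T :: 'a :: comm_semiring_0 mat)"
  by (rule transpose_mult[of _ "dim_row A" "dim_col A" _ "dim_col B"]) auto

text \<open>With these laws the simplifier normalises matrix polynomials as soon as the dimensions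
  of the atoms are known.\<close>
lemmas mat_ring_dims_simps = mult_add_distrib_mat_dims add_mult_distrib_mat_dims
  mult_minus_distrib_mat_dims minus_mult_distrib_mat_dims assoc_mult_mat_dims assoc_mult_mat_vec_dims

lemma add_mult_less_mult: "(i :: nat) < m \<Longrightarrow> t < l \<Longrightarrow> i + m * t < m * l"
proof -
  assume "i < m" "t < l"
  then have "i + m * t < m * Suc t" by simp
  also have "\<dots> \<le> m * l" using \<open>t < l\<close> by (intro mult_le_mono2) simp
  finally show ?thesis .
qed

lemma sum_lessThan_mult_split:
  fixes m l :: nat
  shows "(\<Sum>q < m * l. f q) = (\<Sum>t < l. \<Sum>i < m. (f (i + m * t) :: 'a :: comm_monoid_add))"
proof (induction l)
  case (Suc l)
  have "{..<m * Suc l} = {..<m * l} \<union> {m * l..<m * l + m}" by auto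
  moreover have "(\<Sum>q\<in>{m * l..<m * l + m}. f q) = (\<Sum>i<m. f (i + m * l))"
    by (rule sum.reindex_bij_witness[of _ "\<lambda>i. i + m * l" "\<lambda>q. q - m * l"]) auto
  ultimately show ?case using Suc by (simp add: sum.union_disjoint ivl_disj_int)
qed simp

lemma eq_matI_mult_vec:
  fixes A B :: "'a :: semiring_1 mat"
  assumes "A \<in> carrier_mat m n" "B \<in> carrier_mat m n"
    and "\<And>v. v \<in> carrier_vec n \<Longrightarrow> A *\<^sub>v v = B *\<^sub>v v"
  shows "A = B"
proof (rule eq_matI)
  fix i j assume "i < dim_row B" "j < dim_col B"
  moreover have "vec_index (A *\<^sub>v unit_vec n j) i = vec_index (B *\<^sub>v unit_vec n j) i"
    using assms(3)[of "unit_vec n j"] by simp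
  ultimately show "A $$ (i, j) = B $$ (i, j)" using assms(1,2) by simp
qed (use assms in auto)

subsection \<open>Kronecker products\<close>

lemma dim_kron [simp]:
  "dim_row (kron A B) = dim_row A * dim_row B" "dim_col (kron A B) = dim_col A * dim_col B"
  by (simp_all add: kron_def)

lemma index_kron [simp]:
  "i < dim_row A * dim_row B \<Longrightarrow> j < dim_col A * dim_col B \<Longrightarrow>
    kron A B $$ (i, j) = A $$ (i div dim_row B, j div dim_col B) * B $$ (i mod dim_row B, j mod dim_col B)"
  by (simp add: kron_def)

lemma transpose_kron: "(kron A B)\<^sup>T = kron A\<^sup>T B\<^sup>T"
proof (rule eq_matI)
  fix i j assume ij: "i < dim_row (kron A\<^sup>T B\<^sup>T)" "j < dim_col (kron A\<^sup>T B\<^sup>T)"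
  moreover have "0 < dim_row B" "0 < dim_col B" using ij by (auto intro!: gr0I)
  ultimately show "(kron A B)\<^sup>T $$ (i, j) = kron A\<^sup>T B\<^sup>T $$ (i, j)"
    by (simp add: less_mult_imp_div_less)
qed auto

lemma kron_one: "kron (1\<^sub>m m) (1\<^sub>m n) = 1\<^sub>m (m * n)"
proof (rule eq_matI)
  fix i j assume ij: "i < dim_row (1\<^sub>m (m * n) :: real mat)" "j < dim_col (1\<^sub>m (m * n) :: real mat)"
  then have "0 < n" by (cases n) auto
  moreover have "i = j \<longleftrightarrow> i div n = j div n \<and> i mod n = j mod n"
    by (metis div_mult_mod_eq)
  ultimately show "kron (1\<^sub>m m) (1\<^sub>m n) $$ (i, j) = 1\<^sub>m (m * n) $$ (i, j)"
    using ij by (simp add: less_mult_imp_div_less mult.commute)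
qed auto

lemma kron_mult:
  assumes AC: "dim_col A = dim_row C" and BD: "dim_col B = dim_row D"
  shows "kron A B * kron C D = kron (A * C) (B * D)"
proof (rule eq_matI)
  fix i j assume "i < dim_row (kron (A * C) (B * D))" "j < dim_col (kron (A * C) (B * D))"
  then have i: "i < dim_row A * dim_row B" and j: "j < dim_col C * dim_col D" by auto
  have ir: "i div dim_row B < dim_row A" "i mod dim_row B < dim_row B"
    using i by (auto simp: less_mult_imp_div_less) (cases "dim_row B"; simp)
  have jc: "j div dim_col D < dim_col C" "j mod dim_col D < dim_col D"
    using j by (auto simp: less_mult_imp_div_less) (cases "dim_col D"; simp)
  let ?a = "\<lambda>t. A $$ (i div dim_row B, t) * C $$ (t, j div dim_col D)"
  let ?b = "\<lambda>s. B $$ (i mod dim_row B, s) * D $$ (s, j mod dim_col D)"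
  have "(kron A B * kron C D) $$ (i, j)
      = (\<Sum>q < dim_col B * dim_col A. kron A B $$ (i, q) * kron C D $$ (q, j))"
    using i j AC BD by (simp add: scalar_prod_def atLeast0LessThan mult.commute)
  also have "\<dots> = (\<Sum>t < dim_col A. \<Sum>s < dim_col B. ?a t * ?b s)"
    unfolding sum_lessThan_mult_split
  proof (intro sum.cong refl)
    fix t s assume "t \<in> {..<dim_col A}" "s \<in> {..<dim_col B}"
    then show "kron A B $$ (i, s + dim_col B * t) * kron C D $$ (s + dim_col B * t, j) = ?a t * ?b s"
      using i j AC BD add_mult_less_mult[of s "dim_col B" t "dim_col A"] by (simp add: mult_ac)
  qed
  also have "\<dots> = (A * C) $$ (i div dim_row B, j div dim_col D) * (B * D) $$ (i mod dim_row B, j mod dim_col D)"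
    using ir jc AC BD by (simp add: scalar_prod_def atLeast0LessThan sum_product)
  finally show "(kron A B * kron C D) $$ (i, j) = kron (A * C) (B * D) $$ (i, j)"
    using i j by simp
qed auto

subsection \<open>Inverses via the adjugate\<close>

text \<open>The adjugate formula exhibits every entry of the inverse as a rational function of the
  entries, which makes the differentiability of a curve of inverses elementary.\<close>

definition adj_inverse :: "'a :: field mat \<Rightarrow> 'a mat" where
  "adj_inverse A = (1 / det A) \<cdot>\<^sub>m adj_mat A"

lemma adj_inverse_carrier [simp]: "A \<in> carrier_mat n n \<Longrightarrow> adj_inverse A \<in> carrier_mat n n"
  unfolding adj_inverse_def by (intro smult_carrier_mat adj_mat(1))

lemma adj_inverse_mult:
  assumes A: "A \<in> carrier_mat n n" and det: "det A \<noteq> 0"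
  shows "A * adj_inverse A = 1\<^sub>m n" "adj_inverse A * A = 1\<^sub>m n"
proof -
  have "A * adj_inverse A = (1 / det A) \<cdot>\<^sub>m (det A \<cdot>\<^sub>m 1\<^sub>m n)"
    unfolding adj_inverse_def using adj_mat[OF A] A by (simp add: mult_smult_distrib)
  then show "A * adj_inverse A = 1\<^sub>m n" using det by (intro eq_matI) auto
  have "adj_inverse A * A = (1 / det A) \<cdot>\<^sub>m (det A \<cdot>\<^sub>m 1\<^sub>m n)"
    unfolding adj_inverse_def using adj_mat[OF A] A by (simp add: mult_smult_assoc_mat)
  then show "adj_inverse A * A = 1\<^sub>m n" using det by (intro eq_matI) auto
qed

lemma adj_inverse_one [simp]: "adj_inverse (1\<^sub>m n) = (1\<^sub>m n :: 'a :: field mat)"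
proof -
  have "adj_inverse (1\<^sub>m n) = 1\<^sub>m n * adj_inverse (1\<^sub>m n :: 'a mat)"
    by (rule left_mult_one_mat[symmetric], rule adj_inverse_carrier) simp
  also have "\<dots> = 1\<^sub>m n" by (rule adj_inverse_mult(1)) simp_all
  finally show ?thesis .
qed

lemma adj_inverse_symmetric:
  fixes A :: "'a :: field mat"
  assumes A: "A \<in> carrier_mat n n" and det: "det A \<noteq> 0" and sym: "A\<^sup>T = A"
  shows "(adj_inverse A)\<^sup>T = adj_inverse A"
proof -
  let ?G = "adj_inverse A"
  have G: "?G \<in> carrier_mat n n" using A by simp
  note dims = carrier_matD[OF A] carrier_matD[OF G]
  have left: "?G\<^sup>T * A = 1\<^sub>m n"
    using arg_cong[OF adj_inverse_mult(1)[OF A det], of transpose_mat] dims sym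
    by (simp add: transpose_mult_dims)
  have "?G\<^sup>T = ?G\<^sup>T * (A * ?G)" using adj_inverse_mult(1)[OF A det] dims by simp
  also have "\<dots> = ?G" using left dims by (simp flip: assoc_mult_mat_dims)
  finally show ?thesis .
qed

subsection \<open>Row spaces and orthogonal projectors\<close>

lemma row_space_transpose: "row_space B\<^sup>T = {B *\<^sub>v x | x. x \<in> carrier_vec (dim_col B)}"
  by (simp add: row_space_def)

lemma row_space_mult_left_invertible:
  fixes M K A :: "real mat"
  assumes M: "M \<in> carrier_mat m p" and K: "K \<in> carrier_mat p m" and KM: "K * M = 1\<^sub>m p"
    and A: "A \<in> carrier_mat p q"
  shows "row_space (M * A) = row_space A"
proof (intro equalityI subsetI)
  fix w assume "w \<in> row_space (M * A)"
  then obtain x where x: "x \<in> carrier_vec m" and w: "w = (M * A)\<^sup>T *\<^sub>v x"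
    using M unfolding row_space_def by auto
  have "w = A\<^sup>T *\<^sub>v (M\<^sup>T *\<^sub>v x)" using w M A x by (simp add: transpose_mult_dims)
  moreover have "M\<^sup>T *\<^sub>v x \<in> carrier_vec (dim_row A)" using M A x by simp
  ultimately show "w \<in> row_space A" unfolding row_space_def by blast
next
  fix w assume "w \<in> row_space A"
  then obtain y where y: "y \<in> carrier_vec p" and w: "w = A\<^sup>T *\<^sub>v y"
    using A unfolding row_space_def by auto
  have "M\<^sup>T * K\<^sup>T = 1\<^sub>m p"
    using arg_cong[OF KM, of transpose_mat] M K by (simp add: transpose_mult_dims)
  then have "w = (M * A)\<^sup>T *\<^sub>v (K\<^sup>T *\<^sub>v y)"
    using w M K A y by (simp add: transpose_mult_dims assoc_mult_mat_vec[symmetric, of _ q m _ p])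
  moreover have "K\<^sup>T *\<^sub>v y \<in> carrier_vec (dim_row (M * A))" using M K y by simp
  ultimately show "w \<in> row_space (M * A)" unfolding row_space_def by blast
qed

lemma orth_proj_rows_eqI:
  fixes A P :: "real mat"
  assumes P: "P \<in> carrier_mat (dim_col A) (dim_col A)" and sym: "P\<^sup>T = P" and idem: "P * P = P"
    and range: "\<And>v. v \<in> carrier_vec (dim_col A) \<Longrightarrow> P *\<^sub>v v \<in> row_space A"
    and identity_on: "\<And>w. w \<in> row_space A \<Longrightarrow> P *\<^sub>v w = w"
  shows "orth_proj_rows A = P"
  unfolding orth_proj_rows_def
proof (rule the_equality)
  show "P \<in> carrier_mat (dim_col A) (dim_col A) \<and> P\<^sup>T = P \<and> P * P = P \<and>
      (\<forall>v\<in>carrier_vec (dim_col A). P *\<^sub>v v \<in> row_space A) \<and> (\<forall>w\<in>row_space A. P *\<^sub>v w = w)"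
    using assms by blast
  fix P' assume P': "P' \<in> carrier_mat (dim_col A) (dim_col A) \<and> P'\<^sup>T = P' \<and> P' * P' = P' \<and>
      (\<forall>v\<in>carrier_vec (dim_col A). P' *\<^sub>v v \<in> row_space A) \<and> (\<forall>w\<in>row_space A. P' *\<^sub>v w = w)"
  have absorb: "Q1 * Q2 = Q2"
    if "Q1 \<in> carrier_mat (dim_col A) (dim_col A)" "Q2 \<in> carrier_mat (dim_col A) (dim_col A)"
      and "\<forall>v\<in>carrier_vec (dim_col A). Q2 *\<^sub>v v \<in> row_space A" "\<forall>w\<in>row_space A. Q1 *\<^sub>v w = w"
    for Q1 Q2
    by (rule eq_matI_mult_vec[of _ "dim_col A" "dim_col A"]) (use that in auto)
  note dims = carrier_matD[OF P] carrier_matD[OF conjunct1[OF P']]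
  have "P' = (P * P')\<^sup>T" using absorb[of P P'] P P' range identity_on by simp
  also have "\<dots> = P' * P" using P' sym dims by (simp add: transpose_mult_dims)
  also have "\<dots> = P" using absorb[of P' P] P P' range identity_on by simp
  finally show "P' = P" .
qed

lemma orth_proj_rows_cong:
  "row_space A = row_space A' \<Longrightarrow> dim_col A = dim_col A' \<Longrightarrow> orth_proj_rows A = orth_proj_rows A'"
  unfolding orth_proj_rows_def by simp

lemma orth_proj_rows_transpose:
  fixes B :: "real mat"
  assumes B: "B \<in> carrier_mat N r" and det: "det (B\<^sup>T * B) \<noteq> 0"
  shows "orth_proj_rows B\<^sup>T = B * adj_inverse (B\<^sup>T * B) * B\<^sup>T"
proof -
  let ?G = "adj_inverse (B\<^sup>T * B)"
  have H: "B\<^sup>T * B \<in> carrier_mat r r" using B by simp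
  have G: "?G \<in> carrier_mat r r" using H by simp
  note dims = carrier_matD[OF B] carrier_matD[OF G]
  have G_sym: "?G\<^sup>T = ?G"
    by (rule adj_inverse_symmetric[OF H det]) (use B in \<open>simp add: transpose_mult_dims\<close>)
  have PB: "B * ?G * B\<^sup>T * B = B"
    using dims adj_inverse_mult(2)[OF H det] by (simp add: mat_ring_dims_simps)
  show ?thesis
  proof (rule orth_proj_rows_eqI)
    show "B * ?G * B\<^sup>T \<in> carrier_mat (dim_col B\<^sup>T) (dim_col B\<^sup>T)" using B G by auto
    show "(B * ?G * B\<^sup>T)\<^sup>T = B * ?G * B\<^sup>T"
      using dims G_sym by (simp add: transpose_mult_dims mat_ring_dims_simps)
    have "B * ?G * B\<^sup>T * (B * ?G * B\<^sup>T) = (B * ?G * B\<^sup>T * B) * (?G * B\<^sup>T)"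
      using dims by (simp add: mat_ring_dims_simps)
    also have "\<dots> = B * ?G * B\<^sup>T" unfolding PB using dims by (simp add: mat_ring_dims_simps)
    finally show "B * ?G * B\<^sup>T * (B * ?G * B\<^sup>T) = B * ?G * B\<^sup>T" .
    fix v :: "real vec" assume "v \<in> carrier_vec (dim_col B\<^sup>T)"
    then have v: "v \<in> carrier_vec N" using B by simp
    have "B * ?G * B\<^sup>T *\<^sub>v v = B *\<^sub>v (?G * B\<^sup>T *\<^sub>v v)"
      using dims v by (simp add: mat_ring_dims_simps)
    moreover have "?G * B\<^sup>T *\<^sub>v v \<in> carrier_vec (dim_col B)"
      using mult_mat_vec_carrier[OF mult_carrier_mat[OF G transpose_carrier_mat[THEN iffD2, OF B]] v] B
      by simp
    ultimately show "B * ?G * B\<^sup>T *\<^sub>v v \<in> row_space B\<^sup>T" unfolding row_space_transpose by blast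
  next
    fix w assume "w \<in> row_space B\<^sup>T"
    then obtain x where x: "x \<in> carrier_vec r" and w: "w = B *\<^sub>v x"
      using B unfolding row_space_transpose by auto
    have "B * ?G * B\<^sup>T *\<^sub>v (B *\<^sub>v x)
        = (B * ?G * B\<^sup>T * B) *\<^sub>v x"
      by (rule assoc_mult_mat_vec[symmetric, of _ N N _ r]) (use B G x in auto)
    then show "B * ?G * B\<^sup>T *\<^sub>v w = w" unfolding w PB .
  qed
qed

subsection \<open>Derivatives of matrix-valued curves\<close>

definition mat_has_derivative :: "(real \<Rightarrow> real mat) \<Rightarrow> real mat \<Rightarrow> real \<Rightarrow> bool" where
  "mat_has_derivative F F' x \<longleftrightarrow> (\<forall>t. F t \<in> carrier_mat (dim_row F') (dim_col F')) \<and>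
     (\<forall>i < dim_row F'. \<forall>j < dim_col F'. ((\<lambda>t. F t $$ (i, j)) has_real_derivative F' $$ (i, j)) (at x))"

lemma mat_has_derivativeD:
  assumes "mat_has_derivative F F' x"
  shows mat_has_derivative_carrier: "F t \<in> carrier_mat (dim_row F') (dim_col F')"
    and mat_has_derivative_dim_row: "dim_row (F t) = dim_row F'"
    and mat_has_derivative_dim_col: "dim_col (F t) = dim_col F'"
    and mat_has_derivative_entry: "i < dim_row F' \<Longrightarrow> j < dim_col F' \<Longrightarrow>
      ((\<lambda>t. F t $$ (i, j)) has_real_derivative F' $$ (i, j)) (at x)"
  using assms unfolding mat_has_derivative_def by auto

lemma mat_has_derivativeI:
  assumes "\<And>t. F t \<in> carrier_mat m n"
    and "\<And>i j. i < m \<Longrightarrow> j < n \<Longrightarrow> ((\<lambda>t. F t $$ (i, j)) has_real_derivative F' $$ (i, j)) (at x)"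
    and "F' \<in> carrier_mat m n"
  shows "mat_has_derivative F F' x"
  using assms unfolding mat_has_derivative_def by auto

lemma mat_has_derivative_const: "mat_has_derivative (\<lambda>t. A) (0\<^sub>m (dim_row A) (dim_col A)) x"
  unfolding mat_has_derivative_def by auto

lemma mat_has_derivative_mult:
  assumes F: "mat_has_derivative F F' x" and G: "mat_has_derivative G G' x"
    and dim: "dim_col F' = dim_row G'"
  shows "mat_has_derivative (\<lambda>t. F t * G t) (F' * G x + F x * G') x"
proof (rule mat_has_derivativeI)
  note carriers = mat_has_derivative_carrier[OF F] mat_has_derivative_carrier[OF G]
  fix i j assume i: "i < dim_row F'" and j: "j < dim_col G'"
  have entry: "(F t * G t) $$ (i, j) = (\<Sum>l < dim_row G'. F t $$ (i, l) * G t $$ (l, j))" for t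
    using carriers[of t] i j dim by (auto simp: scalar_prod_def atLeast0LessThan)
  have product_entry: "(F' * G x + F x * G') $$ (i, j)
      = (\<Sum>l < dim_row G'. F' $$ (i, l) * G x $$ (l, j) + F x $$ (i, l) * G' $$ (l, j))"
    using carriers[of x] i j dim by (auto simp: scalar_prod_def atLeast0LessThan sum.distrib)
  show "((\<lambda>t. (F t * G t) $$ (i, j)) has_real_derivative (F' * G x + F x * G') $$ (i, j)) (at x)"
    unfolding entry product_entry
    by (rule DERIV_sum, rule DERIV_mult[THEN DERIV_cong])
      (use i j dim mat_has_derivative_entry[OF F] mat_has_derivative_entry[OF G] in auto)
qed (use mat_has_derivative_dim_row[OF F] mat_has_derivative_dim_col[OF F]
    mat_has_derivative_dim_row[OF G] mat_has_derivative_dim_col[OF G] dim in \<open>auto intro!: carrier_matI\<close>)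

lemma mat_has_derivative_mult_const:
  assumes F: "mat_has_derivative F F' x" and dim: "dim_col F' = dim_row M"
  shows "mat_has_derivative (\<lambda>t. F t * M) (F' * M) x"
proof -
  have "mat_has_derivative (\<lambda>t. F t * M) (F' * M + F x * 0\<^sub>m (dim_row M) (dim_col M)) x"
    by (rule mat_has_derivative_mult[OF F mat_has_derivative_const]) (use dim in simp)
  moreover have "F' * M + F x * 0\<^sub>m (dim_row M) (dim_col M) = F' * M"
    using mat_has_derivative_carrier[OF F, of x] dim by (intro eq_matI) auto
  ultimately show ?thesis by simp
qed

lemma mat_has_derivative_transpose:
  assumes F: "mat_has_derivative F F' x"
  shows "mat_has_derivative (\<lambda>t. (F t)\<^sup>T) F'\<^sup>T x"
proof (rule mat_has_derivativeI)
  fix i j assume ij: "i < dim_col F'" "j < dim_row F'"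
  then have "(F t)\<^sup>T $$ (i, j) = F t $$ (j, i)" for t
    using mat_has_derivative_carrier[OF F, of t] by simp
  then show "((\<lambda>t. (F t)\<^sup>T $$ (i, j)) has_real_derivative F'\<^sup>T $$ (i, j)) (at x)"
    using ij mat_has_derivative_entry[OF F, of j i] by simp
qed (use mat_has_derivative_carrier[OF F] in auto)

lemma mat_has_derivative_kron_const:
  assumes F: "mat_has_derivative F F' x"
  shows "mat_has_derivative (\<lambda>t. kron (F t) M) (kron F' M) x"
proof (rule mat_has_derivativeI)
  fix i j assume i: "i < dim_row F' * dim_row M" and j: "j < dim_col F' * dim_col M"
  have "kron (F t) M $$ (i, j)
      = F t $$ (i div dim_row M, j div dim_col M) * M $$ (i mod dim_row M, j mod dim_col M)" for t
    using i j mat_has_derivative_carrier[OF F, of t] by simp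
  moreover have "i div dim_row M < dim_row F'" "j div dim_col M < dim_col F'"
    using i j by (auto simp: less_mult_imp_div_less)
  ultimately show "((\<lambda>t. kron (F t) M $$ (i, j)) has_real_derivative kron F' M $$ (i, j)) (at x)"
    using i j mat_has_derivative_entry[OF F] by (auto intro!: DERIV_cmult_right)
qed (use mat_has_derivative_dim_row[OF F] mat_has_derivative_dim_col[OF F] in \<open>auto intro!: carrier_matI\<close>)

lemma mat_has_derivative_unfoldR:
  assumes "\<And>i a b. i < nk \<Longrightarrow> a < rl \<Longrightarrow> b < rr \<Longrightarrow>
      ((\<lambda>t. C t i $$ (a, b)) has_real_derivative C' i $$ (a, b)) (at x)"
  shows "mat_has_derivative (\<lambda>t. unfoldR rl nk rr (C t)) (unfoldR rl nk rr C') x"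
proof (rule mat_has_derivativeI)
  fix a q assume a: "a < rl" and q: "q < nk * rr"
  then have "0 < nk" by (auto intro!: gr0I)
  then have "q mod nk < nk" "q div nk < rr" using q by (auto simp: less_mult_imp_div_less mult.commute)
  then show "((\<lambda>t. unfoldR rl nk rr (C t) $$ (a, q)) has_real_derivative unfoldR rl nk rr C' $$ (a, q)) (at x)"
    using a q assms by (simp add: unfoldR_def)
qed (auto simp: unfoldR_def)

lemma mat_has_derivative_entry_eventually_eq:
  assumes F: "mat_has_derivative F F' x" and eq: "eventually (\<lambda>t. G t = F t) (nhds x)"
    and ij: "i < dim_row F'" "j < dim_col F'"
  shows "((\<lambda>t. G t $$ (i, j)) has_real_derivative F' $$ (i, j)) (at x)"
proof -
  have "eventually (\<lambda>t. G t $$ (i, j) = F t $$ (i, j)) (nhds x)" using eq by (rule eventually_mono) simp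
  from DERIV_cong_ev[OF refl this refl] show ?thesis using mat_has_derivative_entry[OF F ij] by simp
qed

lemma mat_has_derivative_unique:
  assumes F: "mat_has_derivative F F' x" and G: "mat_has_derivative G G' x"
    and eq: "eventually (\<lambda>t. F t = G t) (nhds x)"
  shows "F' = G'"
proof -
  have "F x = G x" using eq by (auto simp: eventually_nhds)
  then have dims: "dim_row F' = dim_row G'" "dim_col F' = dim_col G'"
    using mat_has_derivative_carrier[OF F, of x] mat_has_derivative_carrier[OF G, of x] by auto
  show ?thesis
  proof (rule eq_matI)
    fix i j assume i: "i < dim_row G'" and j: "j < dim_col G'"
    have "((\<lambda>t. G t $$ (i, j)) has_real_derivative F' $$ (i, j)) (at x)"
      by (rule mat_has_derivative_entry_eventually_eq[OF F]) (use eq i j dims in \<open>auto elim: eventually_mono\<close>)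
    then show "F' $$ (i, j) = G' $$ (i, j)"
      using mat_has_derivative_entry[OF G, of i j] i j DERIV_unique by blast
  qed (use dims in auto)
qed

lemma mat_has_derivative_of_differentiable:
  assumes "\<And>t. F t \<in> carrier_mat m n"
    and "\<And>i j. i < m \<Longrightarrow> j < n \<Longrightarrow> (\<lambda>t. F t $$ (i, j)) differentiable (at x)"
  shows "mat_has_derivative F (mat m n (\<lambda>(i, j). deriv (\<lambda>t. F t $$ (i, j)) x)) x"
  using assms unfolding mat_has_derivative_def by (auto simp: DERIV_deriv_iff_real_differentiable)

lemma det_differentiable:
  fixes F :: "real \<Rightarrow> real mat"
  assumes carrier: "\<And>t. F t \<in> carrier_mat n n"
    and entries: "\<And>i j. i < n \<Longrightarrow> j < n \<Longrightarrow> (\<lambda>t. F t $$ (i, j)) differentiable (at x)"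
  shows "(\<lambda>t. det (F t)) differentiable (at x)"
proof -
  have "(\<lambda>t. \<Prod>i = 0..<n. F t $$ (i, p i)) differentiable (at x)" if "p permutes {0..<n}" for p
  proof -
    have "\<forall>i\<in>{0..<n}. \<exists>D. ((\<lambda>t. F t $$ (i, p i)) has_real_derivative D) (at x)"
      using entries permutes_in_image[OF that] by (auto simp: real_differentiable_def)
    then obtain D where "\<forall>i\<in>{0..<n}. ((\<lambda>t. F t $$ (i, p i)) has_real_derivative D i) (at x)"
      by metis
    then show ?thesis
      using has_field_derivative_prod[of "{0..<n}" "\<lambda>i t. F t $$ (i, p i)" D x]
      unfolding real_differentiable_def by blast
  qed
  moreover have "det (F t) =
      (\<Sum>p \<in> {p. p permutes {0..<n}}. signof p * (\<Prod>i = 0..<n. F t $$ (i, p i)))" for t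
    using det_def'[OF carrier] .
  ultimately show ?thesis by (auto intro!: differentiable_sum differentiable_mult simp: finite_permutations)
qed

lemma adj_mat_entry_differentiable:
  fixes F :: "real \<Rightarrow> real mat"
  assumes carrier: "\<And>t. F t \<in> carrier_mat n n"
    and entries: "\<And>i j. i < n \<Longrightarrow> j < n \<Longrightarrow> (\<lambda>t. F t $$ (i, j)) differentiable (at x)"
    and i: "i < n" and j: "j < n"
  shows "(\<lambda>t. adj_mat (F t) $$ (i, j)) differentiable (at x)"
proof -
  have "(\<lambda>t. det (mat_delete (F t) j i)) differentiable (at x)"
  proof (rule det_differentiable)
    show "mat_delete (F t) j i \<in> carrier_mat (n - 1) (n - 1)" for t
      by (rule mat_delete_carrier[OF carrier])
    fix a b assume ab: "a < n - 1" "b < n - 1"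
    then have "mat_delete (F t) j i $$ (a, b)
        = F t $$ (if a < j then a else Suc a, if b < i then b else Suc b)" for t
      using carrier[of t] by (auto simp: mat_delete_def)
    then show "(\<lambda>t. mat_delete (F t) j i $$ (a, b)) differentiable (at x)"
      using ab entries by simp
  qed
  moreover have "adj_mat (F t) $$ (i, j) = (-1) ^ (j + i) * det (mat_delete (F t) j i)" for t
    using carrier[of t] i j by (simp add: adj_mat_def cofactor_def)
  ultimately show ?thesis by simp
qed

lemma adj_inverse_entry_differentiable:
  fixes F :: "real \<Rightarrow> real mat"
  assumes carrier: "\<And>t. F t \<in> carrier_mat n n"
    and entries: "\<And>i j. i < n \<Longrightarrow> j < n \<Longrightarrow> (\<lambda>t. F t $$ (i, j)) differentiable (at x)"
    and det: "det (F x) \<noteq> 0" and i: "i < n" and j: "j < n"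
  shows "(\<lambda>t. adj_inverse (F t) $$ (i, j)) differentiable (at x)"
proof -
  have "adj_inverse (F t) $$ (i, j) = adj_mat (F t) $$ (i, j) / det (F t)" for t
    unfolding adj_inverse_def using carrier_matD[OF adj_mat(1)[OF carrier[of t]]] i j by simp
  moreover have "(\<lambda>t. det (F t)) differentiable (at x)" by (rule det_differentiable[OF carrier entries])
  moreover have "(\<lambda>t. adj_mat (F t) $$ (i, j)) differentiable (at x)"
    by (rule adj_mat_entry_differentiable[OF carrier entries i j])
  ultimately show ?thesis using det by simp
qed

lemma mat_has_derivative_eventually_det_nonzero:
  assumes H: "mat_has_derivative H H' x" and square: "dim_row H' = dim_col H'"
    and det: "det (H x) \<noteq> 0"
  shows "eventually (\<lambda>t. det (H t) \<noteq> 0) (nhds x)"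
proof -
  have "(\<lambda>t. det (H t)) differentiable (at x)"
    using mat_has_derivative_carrier[OF H] mat_has_derivative_entry[OF H] square
    by (intro det_differentiable) (auto simp: real_differentiable_def)
  then have "((\<lambda>t. det (H t)) \<longlongrightarrow> det (H x)) (at x)"
    using differentiable_imp_continuous_within isCont_def by blast
  then have "eventually (\<lambda>t. det (H t) \<noteq> 0) (at x)" using det by (rule tendsto_imp_eventually_ne)
  then show ?thesis using det by (auto simp: eventually_at_filter elim: eventually_mono)
qed

lemma mat_has_derivative_adj_inverse:
  assumes H: "mat_has_derivative H H' x" and square: "H' \<in> carrier_mat n n"
    and det: "det (H x) \<noteq> 0"
  shows "mat_has_derivative (\<lambda>t. adj_inverse (H t)) (- (adj_inverse (H x) * H' * adj_inverse (H x))) x"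
proof -
  let ?Hi = "\<lambda>t. adj_inverse (H t)"
  have Hc: "H t \<in> carrier_mat n n" for t using mat_has_derivative_carrier[OF H] square by auto
  have Hi_c: "?Hi t \<in> carrier_mat n n" for t using Hc by simp
  have "(\<lambda>t. ?Hi t $$ (i, j)) differentiable (at x)" if "i < n" "j < n" for i j
    using Hc mat_has_derivative_entry[OF H] square det that
    by (intro adj_inverse_entry_differentiable) (auto simp: real_differentiable_def)
  then obtain Hi' where HiD: "mat_has_derivative ?Hi Hi' x" and Hi'_c: "Hi' \<in> carrier_mat n n"
    using mat_has_derivative_of_differentiable[OF Hi_c] by fastforce
  have "eventually (\<lambda>t. H t * ?Hi t = 1\<^sub>m n) (nhds x)"
    using mat_has_derivative_eventually_det_nonzero[OF H _ det] square
    by (auto elim: eventually_mono intro: adj_inverse_mult(1)[OF Hc])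
  then have sum_zero: "H' * ?Hi x + H x * Hi' = 0\<^sub>m n n"
    using mat_has_derivative_unique[OF mat_has_derivative_mult[OF H HiD] mat_has_derivative_const] square Hi'_c
    by auto
  note dims = carrier_matD[OF Hc[of x]] carrier_matD[OF Hi_c[of x]] carrier_matD[OF square]
    carrier_matD[OF Hi'_c]
  have "H x * Hi' = - (H' * ?Hi x)"
  proof (rule eq_matI)
    fix i j assume "i < dim_row (- (H' * ?Hi x))" "j < dim_col (- (H' * ?Hi x))"
    then have ij: "i < n" "j < n" using dims by auto
    then have "(H' * ?Hi x + H x * Hi') $$ (i, j) = 0" using sum_zero by simp
    then show "(H x * Hi') $$ (i, j) = (- (H' * ?Hi x)) $$ (i, j)" using ij dims by simp
  qed (use dims in auto)
  then have "?Hi x * (H x * Hi') = - (?Hi x * H' * ?Hi x)"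
    using dims by (simp add: mat_ring_dims_simps)
  moreover have "?Hi x * (H x * Hi') = Hi'"
    using adj_inverse_mult(2)[OF Hc det] dims by (simp flip: assoc_mult_mat_dims)
  ultimately show ?thesis using HiD by simp
qed

lemma orth_projector_has_derivative:
  fixes B :: "real \<Rightarrow> real mat"
  assumes B: "mat_has_derivative B W x" and W: "W \<in> carrier_mat N r"
    and orth: "(B x)\<^sup>T * B x = 1\<^sub>m r"
  shows "mat_has_derivative (\<lambda>t. B t * adj_inverse ((B t)\<^sup>T * B t) * (B t)\<^sup>T)
      ((1\<^sub>m N - B x * (B x)\<^sup>T) * W * (B x)\<^sup>T + B x * W\<^sup>T * (1\<^sub>m N - B x * (B x)\<^sup>T)) x"
    and "eventually (\<lambda>t. det ((B t)\<^sup>T * B t) \<noteq> 0) (nhds x)"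
proof -
  let ?X = "B x"
  let ?H' = "W\<^sup>T * ?X + ?X\<^sup>T * W"
  have X: "?X \<in> carrier_mat N r" using mat_has_derivative_carrier[OF B] W by simp
  have H'_c: "?H' \<in> carrier_mat r r" using X W by simp
  have HD: "mat_has_derivative (\<lambda>t. (B t)\<^sup>T * B t) ?H' x"
    using mat_has_derivative_mult[OF mat_has_derivative_transpose[OF B] B] by simp
  then show "eventually (\<lambda>t. det ((B t)\<^sup>T * B t) \<noteq> 0) (nhds x)"
    by (rule mat_has_derivative_eventually_det_nonzero) (use X W orth in simp_all)
  \<comment> \<open>the Gram matrix is the identity at x, so its inverse has derivative minus its derivative\<close>
  from mat_has_derivative_adj_inverse[OF HD H'_c]
  have "mat_has_derivative (\<lambda>t. adj_inverse ((B t)\<^sup>T * B t)) (- ?H') x"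
    using orth carrier_matD[OF H'_c] by simp
  from mat_has_derivative_mult[OF mat_has_derivative_mult[OF B this] mat_has_derivative_transpose[OF B]]
  have "mat_has_derivative (\<lambda>t. B t * adj_inverse ((B t)\<^sup>T * B t) * (B t)\<^sup>T)
      ((W * 1\<^sub>m r + ?X * - ?H') * ?X\<^sup>T + ?X * 1\<^sub>m r * W\<^sup>T) x"
    using orth X W by simp
  moreover have "(W * 1\<^sub>m r + ?X * - ?H') * ?X\<^sup>T + ?X * 1\<^sub>m r * W\<^sup>T
      = (1\<^sub>m N - ?X * ?X\<^sup>T) * W * ?X\<^sup>T + ?X * W\<^sup>T * (1\<^sub>m N - ?X * ?X\<^sup>T)"
    using X W by (simp add: mat_ring_dims_simps) (rule eq_matI; simp)
  ultimately show "mat_has_derivative (\<lambda>t. B t * adj_inverse ((B t)\<^sup>T * B t) * (B t)\<^sup>T)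
      ((1\<^sub>m N - ?X * ?X\<^sup>T) * W * ?X\<^sup>T + ?X * W\<^sup>T * (1\<^sub>m N - ?X * ?X\<^sup>T)) x"
    by simp
qed

subsection \<open>Interface matrices of tensor trains\<close>

lemma dim_unfoldR [simp]: "dim_row (unfoldR rl nk rr C) = rl" "dim_col (unfoldR rl nk rr C) = nk * rr"
  by (simp_all add: unfoldR_def)

lemma dim_unfoldL [simp]: "dim_row (unfoldL rl nk rr C) = rl * nk" "dim_col (unfoldL rl nk rr C) = rr"
  by (simp_all add: unfoldL_def)

lemma unfoldR_cong:
  assumes "\<And>i a b. i < nk \<Longrightarrow> a < rl \<Longrightarrow> b < rr \<Longrightarrow> C i $$ (a, b) = C' i $$ (a, b)"
  shows "unfoldR rl nk rr C = unfoldR rl nk rr C'"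
proof (rule eq_matI)
  fix a q assume "a < dim_row (unfoldR rl nk rr C')" "q < dim_col (unfoldR rl nk rr C')"
  then have a: "a < rl" and q: "q < nk * rr" by auto
  then have "0 < nk" by (auto intro!: gr0I)
  then show "unfoldR rl nk rr C $$ (a, q) = unfoldR rl nk rr C' $$ (a, q)"
    using a q assms by (simp add: unfoldR_def less_mult_imp_div_less mult.commute)
qed auto

lemma dim_XT:
  "dim_row (XT C n r j k) = (if j = 0 then 1 else r (k - 1))"
  "dim_col (XT C n r j k) = prod n {k..<k + j}"
  by (cases j) (induction j arbitrary: k; simp add: prod.atLeast_Suc_lessThan)+

lemma dim_VT:
  "dim_row (VT C dC n r j k) = (if j = 0 then 1 else r (k - 1))"
  "dim_col (VT C dC n r j k) = prod n {k..<k + j}"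
  by (cases j) (induction j arbitrary: k; simp add: prod.atLeast_Suc_lessThan dim_XT)+

lemma XT_carrier:
  "r d = 1 \<Longrightarrow> k + j = d + 1 \<Longrightarrow> XT C n r j k \<in> carrier_mat (r (k - 1)) (prod n {k..<k + j})"
  by (intro carrier_matI) (auto simp: dim_XT)

lemma VT_carrier:
  "r d = 1 \<Longrightarrow> k + j = d + 1 \<Longrightarrow> VT C dC n r j k \<in> carrier_mat (r (k - 1)) (prod n {k..<k + j})"
  by (intro carrier_matI) (auto simp: dim_VT)

lemma XT_cong:
  assumes "\<And>m i a b. m \<in> {k..<k + j} \<Longrightarrow> i < n m \<Longrightarrow> a < r (m - 1) \<Longrightarrow> b < r m \<Longrightarrow>
      C m i $$ (a, b) = C' m i $$ (a, b)"
  shows "XT C n r j k = XT C' n r j k"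
  using assms
proof (induction j arbitrary: k)
  case (Suc j)
  have "unfoldR (r (k - 1)) (n k) (r k) (C k) = unfoldR (r (k - 1)) (n k) (r k) (C' k)"
    by (rule unfoldR_cong) (use Suc.prems in auto)
  moreover have "XT C n r j (Suc k) = XT C' n r j (Suc k)" by (rule Suc.IH) (use Suc.prems in auto)
  ultimately show ?case by simp
qed simp

lemma XT_has_derivative:
  fixes c :: "nat \<Rightarrow> real \<Rightarrow> core"
  assumes rd: "r d = 1" and kj: "k + j = d + 1"
    and core_deriv: "\<And>m i a b. m \<in> {k..<k + j} \<Longrightarrow> i < n m \<Longrightarrow> a < r (m - 1) \<Longrightarrow> b < r m \<Longrightarrow>
      ((\<lambda>t. c m t i $$ (a, b)) has_real_derivative dC m i $$ (a, b)) (at x)"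
    and core_at: "\<And>m i a b. m \<in> {k..<k + j} \<Longrightarrow> i < n m \<Longrightarrow> a < r (m - 1) \<Longrightarrow> b < r m \<Longrightarrow>
      c m x i $$ (a, b) = U m i $$ (a, b)"
  shows "mat_has_derivative (\<lambda>t. XT (\<lambda>m. c m t) n r j k) (VT U dC n r j k) x"
  using kj core_deriv core_at
proof (induction j arbitrary: k)
  case 0
  show ?case using mat_has_derivative_const[of "1\<^sub>m 1" x] by simp
next
  case (Suc j)
  let ?UR = "\<lambda>C. unfoldR (r (k - 1)) (n k) (r k) C"
  let ?I = "1\<^sub>m (n k) :: real mat"
  have IH: "mat_has_derivative (\<lambda>t. XT (\<lambda>m. c m t) n r j (Suc k)) (VT U dC n r j (Suc k)) x"
    by (rule Suc.IH) (use Suc.prems in auto)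
  have Y0: "XT (\<lambda>m. c m x) n r j (Suc k) = XT U n r j (Suc k)"
    by (rule XT_cong) (use Suc.prems in auto)
  have UR0: "?UR (c k x) = ?UR (U k)" by (rule unfoldR_cong) (use Suc.prems in auto)
  have kj': "Suc k + j = d + 1" using Suc.prems(1) by simp
  have VY: "VT U dC n r j (Suc k) \<in> carrier_mat (r k) (prod n {Suc k..<Suc k + j})"
    using VT_carrier[of r d "Suc k" j U dC n, OF rd kj', unfolded diff_Suc_1] .
  have XY: "XT U n r j (Suc k) \<in> carrier_mat (r k) (prod n {Suc k..<Suc k + j})"
    using XT_carrier[of r d "Suc k" j U n, OF rd kj', unfolded diff_Suc_1] .
  have "mat_has_derivative (\<lambda>t. ?UR (c k t) * kron (XT (\<lambda>m. c m t) n r j (Suc k)) ?I)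
      (?UR (dC k) * kron (XT (\<lambda>m. c m x) n r j (Suc k)) ?I
        + ?UR (c k x) * kron (VT U dC n r j (Suc k)) ?I) x"
    by (rule mat_has_derivative_mult[OF mat_has_derivative_unfoldR mat_has_derivative_kron_const[OF IH]])
      (use Suc.prems VY in auto)
  moreover have "?UR (dC k) * kron (XT U n r j (Suc k)) ?I + ?UR (U k) * kron (VT U dC n r j (Suc k)) ?I
      = VT U dC n r (Suc j) k"
    by (simp add: comm_add_mat_dims dim_XT dim_VT)
  ultimately show ?case unfolding Y0 UR0 by simp
qed

lemma XT_orthonormal_rows:
  assumes rd: "r d = 1" and kj: "k + j = d + 1"
    and orth: "\<And>m. m \<in> {k..<k + j} \<Longrightarrow> right_orth (r (m - 1)) (n m) (r m) (C m)"
  shows "XT C n r j k * (XT C n r j k)\<^sup>T = 1\<^sub>m (r (k - 1))"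
  using kj orth
proof (induction j arbitrary: k)
  case 0
  then show ?case using rd by simp
next
  case (Suc j)
  let ?UR = "unfoldR (r (k - 1)) (n k) (r k) (C k)"
  let ?Y = "XT C n r j (Suc k)"
  let ?K = "kron ?Y (1\<^sub>m (n k))"
  have kj': "Suc k + j = d + 1" using Suc.prems(1) by simp
  have Y: "?Y \<in> carrier_mat (r k) (prod n {Suc k..<Suc k + j})"
    using XT_carrier[of r d "Suc k" j C n, OF rd kj', unfolded diff_Suc_1] .
  note dims = carrier_matD[OF Y] mult.commute[of "n k" "r k"]
  have "?Y * ?Y\<^sup>T = 1\<^sub>m (r k)" using Suc.IH[of "Suc k"] Suc.prems by auto
  then have KK: "?K * ?K\<^sup>T = 1\<^sub>m (r k * n k)"
    using dims by (simp add: transpose_kron kron_mult kron_one)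
  have "XT C n r (Suc j) k * (XT C n r (Suc j) k)\<^sup>T = ?UR * (?K * ?K\<^sup>T) * ?UR\<^sup>T"
    using dims by (simp add: transpose_mult_dims mat_ring_dims_simps)
  also have "\<dots> = 1\<^sub>m (r (k - 1))"
    unfolding KK using Suc.prems(2)[of k] dims by (simp add: right_orth_def)
  finally show ?case .
qed

text \<open>The left interface matrix X_{<=k}. With the index convention of kron its rows are
  ordered colexicographically, as in flat.\<close>

primrec Xle :: "(nat \<Rightarrow> core) \<Rightarrow> (nat \<Rightarrow> nat) \<Rightarrow> (nat \<Rightarrow> nat) \<Rightarrow> nat \<Rightarrow> real mat" where
  "Xle C n r 0 = 1\<^sub>m 1"
| "Xle C n r (Suc k) =
    kron (1\<^sub>m (n (Suc k))) (Xle C n r k) * unfoldL (r k) (n (Suc k)) (r (Suc k)) (C (Suc k))"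

lemma Xle_carrier: "r 0 = 1 \<Longrightarrow> Xle C n r k \<in> carrier_mat (prod n {1..k}) (r k)"
  by (induction k) (auto simp: prod.cl_ivl_Suc mult.commute)

lemma Xle_orthonormal_columns:
  assumes r0: "r 0 = 1" and orth: "\<And>m. m \<in> {1..k} \<Longrightarrow> left_orth (r (m - 1)) (n m) (r m) (C m)"
  shows "(Xle C n r k)\<^sup>T * Xle C n r k = 1\<^sub>m (r k)"
  using orth
proof (induction k)
  case 0
  then show ?case using r0 by simp
next
  case (Suc k)
  let ?L = "Xle C n r k"
  let ?K = "kron (1\<^sub>m (n (Suc k))) ?L"
  let ?UL = "unfoldL (r k) (n (Suc k)) (r (Suc k)) (C (Suc k))"
  note dims = carrier_matD[OF Xle_carrier[of r C n k, OF r0]]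
  have "?L\<^sup>T * ?L = 1\<^sub>m (r k)" using Suc by auto
  then have KK: "?K\<^sup>T * ?K = 1\<^sub>m (n (Suc k) * r k)"
    using dims by (simp add: transpose_kron kron_mult kron_one)
  have "(Xle C n r (Suc k))\<^sup>T * Xle C n r (Suc k) = ?UL\<^sup>T * (?K\<^sup>T * ?K) * ?UL"
    using dims by (simp add: transpose_mult_dims mat_ring_dims_simps mult.commute)
  also have "\<dots> = 1\<^sub>m (r (Suc k))"
    unfolding KK using Suc.prems[of "Suc k"] by (simp add: left_orth_def mult.commute)
  finally show ?case .
qed

subsection \<open>Flattenings of tensor trains\<close>

text \<open>Index lists [lo..<hi] are split explicitly below, so they must not be unfolded by simp.\<close>

declare upt_Suc [simp del]

definition slice_product :: "(nat \<Rightarrow> core) \<Rightarrow> (nat \<Rightarrow> nat) \<Rightarrow> nat list \<Rightarrow> real mat \<Rightarrow> real mat" where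
  "slice_product C idx ms M = foldr (\<lambda>m X. C m (idx m) * X) ms M"

lemma slice_product_Nil [simp]: "slice_product C idx [] M = M"
  by (simp add: slice_product_def)

lemma slice_product_Cons [simp]:
  "slice_product C idx (m # ms) M = C m (idx m) * slice_product C idx ms M"
  by (simp add: slice_product_def)

lemma slice_product_append:
  "slice_product C idx (ms @ ms') M = slice_product C idx ms (slice_product C idx ms' M)"
  by (simp add: slice_product_def)

lemma slice_product_cong:
  "(\<And>m. m \<in> set ms \<Longrightarrow> idx m = idx' m) \<Longrightarrow> slice_product C idx ms M = slice_product C idx' ms M"
  by (induction ms) auto

lemma tt_eq_slice_product: "tt d C idx = slice_product C (\<lambda>m. idx ! (m - 1)) [1..<d + 1] (1\<^sub>m 1) $$ (0, 0)"
  by (simp add: tt_def slice_product_def)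

lemma slice_product_carrier:
  assumes "lo \<le> hi"
    and slices: "\<And>m. lo \<le> m \<Longrightarrow> m < hi \<Longrightarrow> C m (idx m) \<in> carrier_mat (r (m - 1)) (r m)"
    and M: "M \<in> carrier_mat (r (hi - 1)) p"
  shows "slice_product C idx [lo..<hi] M \<in> carrier_mat (r (lo - 1)) p"
  using assms(1)
proof (induction lo rule: inc_induct)
  case (step lo)
  then show ?case using slices[of lo] by (simp add: upt_conv_Cons)
qed (use M in simp)

lemma slice_product_mult:
  assumes "lo \<le> hi"
    and slices: "\<And>m. lo \<le> m \<Longrightarrow> m < hi \<Longrightarrow> C m (idx m) \<in> carrier_mat (r (m - 1)) (r m)"
    and M: "M \<in> carrier_mat (r (hi - 1)) p" and M': "M' \<in> carrier_mat p q"
  shows "slice_product C idx [lo..<hi] (M * M') = slice_product C idx [lo..<hi] M * M'"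
  using assms(1)
proof (induction lo rule: inc_induct)
  case (step lo)
  have "slice_product C idx [Suc lo..<hi] M \<in> carrier_mat (r lo) p"
    using slice_product_carrier[of "Suc lo" hi C idx r M p] step.hyps slices M by simp
  then show ?case using step slices[of lo] M' by (simp add: upt_conv_Cons)
qed simp

lemma colex_decode_length [simp]: "length (colex_decode ns a) = length ns"
  by (induction ns arbitrary: a) auto

lemma colex_decode_nth_less:
  "a < prod_list ns \<Longrightarrow> i < length ns \<Longrightarrow> colex_decode ns a ! i < ns ! i"
proof (induction ns arbitrary: a i)
  case (Cons s ns)
  then have "0 < s" by (auto intro!: gr0I)
  moreover have "a div s < prod_list ns"
    using Cons.prems(1) by (simp add: less_mult_imp_div_less mult.commute)
  ultimately show ?case using Cons by (cases i) auto
qed simp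

lemma colex_decode_snoc:
  "a < prod_list ns * m \<Longrightarrow>
    colex_decode (ns @ [m]) a = colex_decode ns (a mod prod_list ns) @ [a div prod_list ns]"
proof (induction ns arbitrary: a)
  case Nil
  then show ?case by simp
next
  case (Cons s ns)
  then have "0 < s" by (auto intro!: gr0I)
  moreover have "a < (prod_list ns * m) * s" using Cons.prems by (simp add: mult_ac)
  then have "a div s < prod_list ns * m" by (rule less_mult_imp_div_less)
  ultimately show ?case
    using Cons.IH[of "a div s"] by (simp add: mod_mult2_eq div_mult2_eq mult.commute)
qed

lemma prod_list_map_upt: "prod_list (map f [lo..<hi]) = prod f {lo..<hi}"
  using prod.distinct_set_conv_list[of "[lo..<hi]" f] by simp

lemma core_slice_carrier:
  assumes "core_dims (r (m - 1)) (n m) (r m) (C m)" and "a < prod n {lo..<hi}" and "lo \<le> m" "m < hi"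
  shows "C m (colex_decode (map n [lo..<hi]) a ! (m - lo)) \<in> carrier_mat (r (m - 1)) (r m)"
proof -
  have "colex_decode (map n [lo..<hi]) a ! (m - lo) < n m"
    using colex_decode_nth_less[of a "map n [lo..<hi]" "m - lo"] assms(2-4) by (simp add: prod_list_map_upt)
  then show ?thesis using assms(1) by (simp add: core_dims_def)
qed

lemma colex_decode_upt_Suc:
  assumes "lo \<le> hi" and "a < prod n {lo..<Suc hi}"
  shows "colex_decode (map n [lo..<Suc hi]) a
    = colex_decode (map n [lo..<hi]) (a mod prod n {lo..<hi}) @ [a div prod n {lo..<hi}]"
proof -
  have "map n [lo..<Suc hi] = map n [lo..<hi] @ [n hi]" using assms(1) by (simp add: upt_Suc)
  moreover have "a < prod_list (map n [lo..<hi]) * n hi"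
    using assms by (simp add: prod_list_map_upt prod.atLeastLessThan_Suc)
  ultimately show ?thesis using colex_decode_snoc by (simp add: prod_list_map_upt)
qed

lemma unfoldR_kron_entry:
  assumes M: "M \<in> carrier_mat rr q" and s: "s < rl" and b: "b < q * nk"
  shows "(unfoldR rl nk rr C * kron M (1\<^sub>m nk)) $$ (s, b) = (\<Sum>t < rr. C (b mod nk) $$ (s, t) * M $$ (t, b div nk))"
proof -
  have nk: "0 < nk" using b by (auto intro!: gr0I)
  have "(unfoldR rl nk rr C * kron M (1\<^sub>m nk)) $$ (s, b)
      = (\<Sum>p < nk * rr. C (p mod nk) $$ (s, p div nk) * (M $$ (p div nk, b div nk) * 1\<^sub>m nk $$ (p mod nk, b mod nk)))"
    using M s b by (simp add: scalar_prod_def atLeast0LessThan unfoldR_def mult.commute)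
  also have "\<dots> = (\<Sum>t < rr. \<Sum>i < nk. C i $$ (s, t) * (M $$ (t, b div nk) * 1\<^sub>m nk $$ (i, b mod nk)))"
    unfolding sum_lessThan_mult_split using nk by simp
  also have "\<dots> = (\<Sum>t < rr. C (b mod nk) $$ (s, t) * M $$ (t, b div nk))"
    using nk by (simp add: sum.delta if_distrib[of "\<lambda>x. _ * (_ * x)"] cong: if_cong)
  finally show ?thesis .
qed

lemma kron_one_unfoldL_entry:
  assumes L: "L \<in> carrier_mat p rl" and a: "a < nk * p" and s: "s < rr"
  shows "(kron (1\<^sub>m nk) L * unfoldL rl nk rr C) $$ (a, s) = (\<Sum>x < rl. L $$ (a mod p, x) * C (a div p) $$ (x, s))"
proof -
  have p: "0 < p" using a by (auto intro!: gr0I)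
  have "(kron (1\<^sub>m nk) L * unfoldL rl nk rr C) $$ (a, s)
      = (\<Sum>q < rl * nk. 1\<^sub>m nk $$ (a div p, q div rl) * L $$ (a mod p, q mod rl) * C (q div rl) $$ (q mod rl, s))"
    using L a s by (simp add: scalar_prod_def atLeast0LessThan unfoldL_def mult.commute)
  also have "\<dots> = (\<Sum>i < nk. \<Sum>x < rl. 1\<^sub>m nk $$ (a div p, i) * L $$ (a mod p, x) * C i $$ (x, s))"
    unfolding sum_lessThan_mult_split by (cases "rl = 0") simp_all
  also have "\<dots> = (\<Sum>x < rl. \<Sum>i < nk. 1\<^sub>m nk $$ (a div p, i) * L $$ (a mod p, x) * C i $$ (x, s))"
    by (rule sum.swap)
  also have "\<dots> = (\<Sum>x < rl. L $$ (a mod p, x) * C (a div p) $$ (x, s))"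
    using a p by (simp add: less_mult_imp_div_less sum.delta if_distrib[of "\<lambda>x. x * _ * _"] cong: if_cong)
  finally show ?thesis .
qed

lemma Xle_entry:
  assumes r0: "r 0 = 1"
    and cores: "\<And>m. m \<in> {1..k} \<Longrightarrow> core_dims (r (m - 1)) (n m) (r m) (C m)"
    and a: "a < prod n {1..k}" and s: "s < r k"
  shows "Xle C n r k $$ (a, s) =
    slice_product C (\<lambda>m. colex_decode (map n [1..<k + 1]) a ! (m - 1)) [1..<k + 1] (1\<^sub>m (r k)) $$ (0, s)"
  using cores a s
proof (induction k arbitrary: a s)
  case 0
  then show ?case using r0 by simp
next
  case (Suc k)
  let ?P = "prod n {1..k}"
  let ?i = "a div ?P"
  let ?idx = "\<lambda>m. colex_decode (map n [1..<k + 1]) (a mod ?P) ! (m - 1)"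
  let ?idx' = "\<lambda>m. colex_decode (map n [1..<Suc k + 1]) a ! (m - 1)"
  let ?S = "slice_product C ?idx [1..<k + 1] (1\<^sub>m (r k))"
  have P: "prod n {1..<k + 1} = ?P" by (simp add: atLeastLessThanSuc_atLeastAtMost)
  have a': "a < n (Suc k) * ?P" using Suc.prems(2) by (simp add: prod.cl_ivl_Suc mult.commute)
  then have "0 < ?P" by (metis gr0I mult_0_right not_less_zero)
  then have a_mod: "a mod ?P < prod n {1..<k + 1}" unfolding P by simp
  have Ci: "C (Suc k) ?i \<in> carrier_mat (r k) (r (Suc k))"
    using Suc.prems(1)[of "Suc k"] a' by (simp add: core_dims_def less_mult_imp_div_less)
  have slices: "C m (?idx m) \<in> carrier_mat (r (m - 1)) (r m)" if "1 \<le> m" "m < k + 1" for m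
    using core_slice_carrier[of r m n C, OF _ a_mod that] Suc.prems(1)[of m] that by simp
  have "Xle C n r (Suc k) $$ (a, s) = (\<Sum>x < r k. Xle C n r k $$ (a mod ?P, x) * C (Suc k) ?i $$ (x, s))"
    using kron_one_unfoldL_entry[OF Xle_carrier[of r C n k, OF r0] a' Suc.prems(3)] by simp
  also have "\<dots> = (\<Sum>x < r k. ?S $$ (0, x) * C (Suc k) ?i $$ (x, s))"
    using Suc.IH Suc.prems a_mod unfolding P by simp
  also have "\<dots> = (?S * C (Suc k) ?i) $$ (0, s)"
    using slice_product_carrier[of 1 "k + 1" C ?idx r "1\<^sub>m (r k)" "r k"] slices Ci Suc.prems(3) r0
    by (simp add: scalar_prod_def atLeast0LessThan)
  also have "?S * C (Suc k) ?i = slice_product C ?idx [1..<k + 1] (C (Suc k) ?i)"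
    using slice_product_mult[of 1 "k + 1" C ?idx r "1\<^sub>m (r k)" "r k"] slices Ci by simp
  also have "\<dots> = slice_product C ?idx' [1..<Suc k + 1] (1\<^sub>m (r (Suc k)))"
  proof -
    have decode: "colex_decode (map n [1..<Suc k + 1]) a = colex_decode (map n [1..<k + 1]) (a mod ?P) @ [?i]"
      using colex_decode_upt_Suc[of 1 "Suc k" a n] Suc.prems(2) P by (simp add: atLeastLessThanSuc_atLeastAtMost)
    have "slice_product C ?idx [1..<k + 1] M = slice_product C ?idx' [1..<k + 1] M" for M
      by (rule slice_product_cong) (unfold decode, auto simp: nth_append)
    moreover have "?idx' (Suc k) = ?i" unfolding decode by (simp add: nth_append)
    moreover have "[1..<Suc k + 1] = [1..<k + 1] @ [Suc k]" by (simp add: upt_Suc)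
    ultimately show ?thesis using Ci by (simp add: slice_product_append)
  qed
  finally show ?case .
qed

lemma XT_entry:
  assumes rd: "r d = 1" and kj: "k + j = d + 1"
    and cores: "\<And>m. m \<in> {k..<k + j} \<Longrightarrow> core_dims (r (m - 1)) (n m) (r m) (C m)"
    and s: "s < r (k - 1)" and b: "b < prod n {k..<k + j}"
  shows "XT C n r j k $$ (s, b) =
    slice_product C (\<lambda>m. colex_decode (map n [k..<k + j]) b ! (m - k)) [k..<k + j] (1\<^sub>m 1) $$ (s, 0)"
  using kj cores s b
proof (induction j arbitrary: k s b)
  case 0
  then show ?case using rd by simp
next
  case (Suc j)
  let ?i = "b mod n k"
  let ?idx = "\<lambda>m. colex_decode (map n [Suc k..<Suc k + j]) (b div n k) ! (m - Suc k)"
  let ?idx' = "\<lambda>m. colex_decode (map n [k..<k + Suc j]) b ! (m - k)"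
  let ?S = "slice_product C ?idx [Suc k..<Suc k + j] (1\<^sub>m 1)"
  have kj': "Suc k + j = d + 1" using Suc.prems(1) by simp
  have split: "[k..<k + Suc j] = k # [Suc k..<Suc k + j]" by (simp add: upt_conv_Cons)
  have "prod n {k..<k + Suc j} = n k * prod n {Suc k..<Suc k + j}"
    by (simp add: prod.atLeast_Suc_lessThan)
  then have b': "b < prod n {Suc k..<Suc k + j} * n k"
    using Suc.prems(4) by (simp only: mult.commute)
  then have nk: "0 < n k" by (metis gr0I mult_0_right not_less_zero)
  have bd: "b div n k < prod n {Suc k..<Suc k + j}" using b' by (rule less_mult_imp_div_less)
  have Ci: "C k ?i \<in> carrier_mat (r (k - 1)) (r k)" using Suc.prems(2)[of k] nk by (simp add: core_dims_def)
  have slices: "C m (?idx m) \<in> carrier_mat (r (m - 1)) (r m)" if "Suc k \<le> m" "m < Suc k + j" for m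
    using core_slice_carrier[of r m n C, OF _ bd that] Suc.prems(2)[of m] that by simp
  have S: "?S \<in> carrier_mat (r k) 1"
    using slice_product_carrier[of "Suc k" "Suc k + j" C ?idx r "1\<^sub>m 1" 1] slices rd kj' by simp
  have "XT C n r (Suc j) k $$ (s, b) = (\<Sum>t < r k. C k ?i $$ (s, t) * XT C n r j (Suc k) $$ (t, b div n k))"
    using unfoldR_kron_entry[OF XT_carrier[of r d "Suc k" j C n, OF rd kj'] Suc.prems(3) b'] by simp
  also have "\<dots> = (\<Sum>t < r k. C k ?i $$ (s, t) * ?S $$ (t, 0))"
    using Suc.IH[OF kj'] Suc.prems(2) bd by simp
  also have "\<dots> = (C k ?i * ?S) $$ (s, 0)"
    using Ci S Suc.prems(3) by (simp add: scalar_prod_def atLeast0LessThan)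
  also have "C k ?i * ?S = slice_product C ?idx' [k..<k + Suc j] (1\<^sub>m 1)"
  proof -
    have decode: "colex_decode (map n [k..<k + Suc j]) b = ?i # colex_decode (map n [Suc k..<Suc k + j]) (b div n k)"
      unfolding split by simp
    have "slice_product C ?idx [Suc k..<Suc k + j] M = slice_product C ?idx' [Suc k..<Suc k + j] M" for M
      by (rule slice_product_cong) (unfold decode, auto simp: Suc_diff_Suc)
    then show ?thesis unfolding split by (simp add: decode)
  qed
  finally show ?case .
qed

lemma tt_append_eq_sum:
  assumes r0: "r 0 = 1" and rd: "r d = 1" and kd: "k \<le> d" and len: "length da = k"
    and left: "\<And>m. 1 \<le> m \<Longrightarrow> m < k + 1 \<Longrightarrow> C m (da ! (m - 1)) \<in> carrier_mat (r (m - 1)) (r m)"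
    and right: "\<And>m. k + 1 \<le> m \<Longrightarrow> m < d + 1 \<Longrightarrow>
      C m (db ! (m - (k + 1))) \<in> carrier_mat (r (m - 1)) (r m)"
  shows "tt d C (da @ db) = (\<Sum>s < r k. slice_product C (\<lambda>m. da ! (m - 1)) [1..<k + 1] (1\<^sub>m (r k)) $$ (0, s)
      * slice_product C (\<lambda>m. db ! (m - (k + 1))) [k + 1..<d + 1] (1\<^sub>m 1) $$ (s, 0))"
proof -
  let ?idx = "\<lambda>m. (da @ db) ! (m - 1)"
  let ?L = "slice_product C (\<lambda>m. da ! (m - 1)) [1..<k + 1] (1\<^sub>m (r k))"
  let ?R = "slice_product C (\<lambda>m. db ! (m - (k + 1))) [k + 1..<d + 1] (1\<^sub>m 1)"
  have L_cong: "slice_product C ?idx [1..<k + 1] M = slice_product C (\<lambda>m. da ! (m - 1)) [1..<k + 1] M" for M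
    by (rule slice_product_cong) (use len in \<open>auto simp: nth_append\<close>)
  have R_cong: "slice_product C ?idx [k + 1..<d + 1] M = slice_product C (\<lambda>m. db ! (m - (k + 1))) [k + 1..<d + 1] M"
    for M by (rule slice_product_cong) (use len in \<open>auto simp: nth_append\<close>)
  have R: "?R \<in> carrier_mat (r k) 1"
    using slice_product_carrier[of "k + 1" "d + 1" C _ r "1\<^sub>m 1" 1] right rd kd by simp
  have L: "?L \<in> carrier_mat (r 0) (r k)"
    using slice_product_carrier[of 1 "k + 1" C _ r "1\<^sub>m (r k)" "r k"] left by simp
  have split: "[1..<d + 1] = [1..<k + 1] @ [k + 1..<d + 1]"
    using kd upt_add_eq_append[of 1 "k + 1" "d - k"] by simp
  have "tt d C (da @ db) = slice_product C ?idx [1..<k + 1] (1\<^sub>m (r k) * ?R) $$ (0, 0)"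
    unfolding tt_eq_slice_product split slice_product_append R_cong using R by simp
  also have "slice_product C ?idx [1..<k + 1] (1\<^sub>m (r k) * ?R) = slice_product C ?idx [1..<k + 1] (1\<^sub>m (r k)) * ?R"
    unfolding L_cong by (rule slice_product_mult[of 1 "k + 1"]) (use left R in auto)
  also have "\<dots> = ?L * ?R" unfolding L_cong ..
  finally show ?thesis using L R r0 by (simp add: scalar_prod_def atLeast0LessThan)
qed

lemma flat_tt_eq_Xle_mult_XT:
  assumes k: "1 \<le> k" "k < d" and r0: "r 0 = 1" and rd: "r d = 1"
    and cores: "\<And>m. m \<in> {1..d} \<Longrightarrow> core_dims (r (m - 1)) (n m) (r m) (C m)"
  shows "flat n d k (tt d C) = Xle C n r k * XT C n r (d - k) (k + 1)"
proof -
  have kj: "k + 1 + (d - k) = d + 1" using k by simp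
  have range: "{k + 1..<k + 1 + (d - k)} = {k + 1..d}" "[k + 1..<k + 1 + (d - k)] = [k + 1..<d + 1]"
    "{1..<k + 1} = {1..k}" "{k + 1..<d + 1} = {k + 1..d}" using k by auto
  have L: "Xle C n r k \<in> carrier_mat (prod n {1..k}) (r k)" using Xle_carrier[of r C n k, OF r0] .
  have R: "XT C n r (d - k) (k + 1) \<in> carrier_mat (r k) (prod n {k + 1..d})"
    using XT_carrier[of r d "k + 1" "d - k" C n, OF rd kj, unfolded range(1)] by simp
  show ?thesis
  proof (rule eq_matI)
    fix a b assume "a < dim_row (Xle C n r k * XT C n r (d - k) (k + 1))"
      "b < dim_col (Xle C n r k * XT C n r (d - k) (k + 1))"
    then have a: "a < prod n {1..k}" and b: "b < prod n {k + 1..d}" using L R by auto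
    let ?da = "colex_decode (map n [1..<k + 1]) a"
    let ?db = "colex_decode (map n [k + 1..<d + 1]) b"
    have "flat n d k (tt d C) $$ (a, b) = tt d C (?da @ ?db)" using a b by (simp add: flat_def)
    also have "\<dots> = (\<Sum>s < r k. slice_product C (\<lambda>m. ?da ! (m - 1)) [1..<k + 1] (1\<^sub>m (r k)) $$ (0, s)
        * slice_product C (\<lambda>m. ?db ! (m - (k + 1))) [k + 1..<d + 1] (1\<^sub>m 1) $$ (s, 0))"
    proof (rule tt_append_eq_sum[where r = r and d = d, OF r0 rd])
      show "C m (?da ! (m - 1)) \<in> carrier_mat (r (m - 1)) (r m)" if "1 \<le> m" "m < k + 1" for m
        using core_slice_carrier[of r m n C a 1 "k + 1", OF _ a[folded range(3)] that] cores[of m] that k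
        by simp
      show "C m (?db ! (m - (k + 1))) \<in> carrier_mat (r (m - 1)) (r m)" if "k + 1 \<le> m" "m < d + 1" for m
        using core_slice_carrier[of r m n C b "k + 1" "d + 1", OF _ b[folded range(4)] that] cores[of m] that k
        by simp
    qed (use k in simp_all)
    also have "\<dots> = (\<Sum>s < r k. Xle C n r k $$ (a, s) * XT C n r (d - k) (k + 1) $$ (s, b))"
      using Xle_entry[of r k n C a] XT_entry[of r d "k + 1" "d - k" n C _ b, unfolded range] r0 rd kj cores k a b
      by simp
    also have "\<dots> = (Xle C n r k * XT C n r (d - k) (k + 1)) $$ (a, b)"
      using L R a b by (simp add: scalar_prod_def atLeast0LessThan)
    finally show "flat n d k (tt d C) $$ (a, b) = (Xle C n r k * XT C n r (d - k) (k + 1)) $$ (a, b)" .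
  qed (use L R in \<open>auto simp: flat_def\<close>)
qed

lemma orth_proj_rows_flat_tt:
  assumes k: "1 \<le> k" "k < d" and r0: "r 0 = 1" and rd: "r d = 1"
    and cores: "\<And>m. m \<in> {1..d} \<Longrightarrow> core_dims (r (m - 1)) (n m) (r m) (C m)"
    and orth: "\<And>m. m \<in> {1..k} \<Longrightarrow> left_orth (r (m - 1)) (n m) (r m) (C m)"
    and G: "G \<in> carrier_mat (r k) (r k)" and K: "K \<in> carrier_mat (r k) (r k)" and GK: "G * K = 1\<^sub>m (r k)"
  defines "B \<equiv> (XT C n r (d - k) (k + 1))\<^sup>T * G"
  assumes det: "det (B\<^sup>T * B) \<noteq> 0"
  shows "orth_proj_rows (flat n d k (tt d C)) = B * adj_inverse (B\<^sup>T * B) * B\<^sup>T"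
proof -
  let ?L = "Xle C n r k"
  let ?X = "XT C n r (d - k) (k + 1)"
  have "{k + 1..<k + 1 + (d - k)} = {k + 1..d}" using k by auto
  then have X: "?X \<in> carrier_mat (r k) (prod n {k + 1..d})"
    using XT_carrier[of r d "k + 1" "d - k" C n] rd k by simp
  have L: "?L \<in> carrier_mat (prod n {1..k}) (r k)" using Xle_carrier[of r C n k, OF r0] .
  have B: "B \<in> carrier_mat (prod n {k + 1..d}) (r k)" unfolding B_def using X G by simp
  have flat: "flat n d k (tt d C) = ?L * ?X" by (rule flat_tt_eq_Xle_mult_XT[OF k r0 rd cores])
  have "row_space (flat n d k (tt d C)) = row_space ?X"
    unfolding flat using row_space_mult_left_invertible[OF L _ _ X, of "?L\<^sup>T"] Xle_orthonormal_columns[OF r0 orth] L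
    by simp
  also have "\<dots> = row_space B\<^sup>T"
  proof -
    have "K\<^sup>T * G\<^sup>T = 1\<^sub>m (r k)" using arg_cong[OF GK, of transpose_mat] G K by (simp add: transpose_mult)
    moreover have "B\<^sup>T = G\<^sup>T * ?X" unfolding B_def using X G by (simp add: transpose_mult)
    ultimately show ?thesis using row_space_mult_left_invertible[of "G\<^sup>T" "r k" "r k" "K\<^sup>T" ?X] G K X by simp
  qed
  finally have "orth_proj_rows (flat n d k (tt d C)) = orth_proj_rows B\<^sup>T"
    by (rule orth_proj_rows_cong) (use B X in \<open>simp add: flat\<close>)
  also have "\<dots> = B * adj_inverse (B\<^sup>T * B) * B\<^sup>T" by (rule orth_proj_rows_transpose[OF B det])
  finally show ?thesis .
qed

subsection \<open>Curves of tensor trains\<close>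

lemma has_real_derivative_of_bigo_square:
  fixes g :: "real \<Rightarrow> real"
  assumes cont: "isCont g 0" and expansion: "(\<lambda>t. g t - u - t * v) \<in> O[at 0](\<lambda>t. t\<^sup>2)"
  shows "g 0 = u" and "(g has_real_derivative v) (at 0)"
proof -
  let ?h = "\<lambda>t. g t - u - t * v"
  obtain c where bound: "eventually (\<lambda>t. norm (?h t) \<le> c * norm (t\<^sup>2)) (at 0)"
    using expansion by (elim landau_o.bigE)
  have nonzero: "eventually (\<lambda>t::real. t \<noteq> 0) (at 0)" by (simp add: eventually_at_filter)
  have quotient: "((\<lambda>t. ?h t / t) \<longlongrightarrow> 0) (at 0)"
  proof (rule Lim_null_comparison)
    show "eventually (\<lambda>t. norm (?h t / t) \<le> c * norm t) (at 0)"
      using bound nonzero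
      by eventually_elim (simp add: power2_eq_square abs_mult divide_le_eq mult.assoc)
    show "((\<lambda>t. c * norm t) \<longlongrightarrow> 0) (at 0)" by (auto intro!: tendsto_eq_intros)
  qed
  have "((\<lambda>t. ?h t / t * t) \<longlongrightarrow> 0) (at 0)" using tendsto_mult[OF quotient tendsto_ident_at] by simp
  then have lim_zero: "(?h \<longlongrightarrow> 0) (at 0)"
    by (rule Lim_transform_eventually) (rule eventually_mono[OF nonzero], simp)
  have lim_value: "(?h \<longlongrightarrow> g 0 - u - 0 * v) (at 0)"
    using cont unfolding isCont_def by (intro tendsto_intros)
  show g0: "g 0 = u" using LIM_unique[OF lim_value lim_zero] by simp
  have "((\<lambda>t. v + ?h t / t) \<longlongrightarrow> v) (at 0)" using tendsto_add[OF tendsto_const quotient] by simp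
  then have "((\<lambda>t. (g t - g 0) / (t - 0)) \<longlongrightarrow> v) (at 0)"
    by (rule Lim_transform_eventually) (rule eventually_mono[OF nonzero], simp add: g0 field_simps)
  then show "(g has_real_derivative v) (at 0)" by (simp add: has_field_derivative_iff)
qed

lemma C_inf_on_isCont:
  assumes "C_inf_on S g" and "t \<in> S"
  shows "isCont g t"
proof -
  obtain D where "D 0 = g" and "\<forall>j. \<forall>t\<in>S. (D j has_real_derivative D (Suc j) t) (at t)"
    using assms(1) unfolding C_inf_on_def by blast
  then have "(g has_real_derivative D (Suc 0) t) (at t)" using assms(2) by metis
  then show ?thesis by (rule DERIV_isCont)
qed

lemma tt_curve_core_derivatives:
  fixes c :: "nat \<Rightarrow> real \<Rightarrow> core"
  assumes eps: "\<epsilon> > 0"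
    and smooth: "\<forall>j\<in>{1..d}. \<forall>i<n j. \<forall>a<r (j-1). \<forall>b<r j. C_inf_on {-\<epsilon><..<\<epsilon>} (\<lambda>t. c j t i $$ (a,b))"
    and expansion: "\<forall>j\<in>{1..d-1}. \<forall>i<n j. \<forall>a<r (j-1). \<forall>b<r j.
        (\<lambda>t. c j t i $$ (a,b) - U j i $$ (a,b) - t * dV j i $$ (a,b)) \<in> O[at 0](\<lambda>t. t^2)"
    and last: "\<forall>t\<in>{-\<epsilon><..<\<epsilon>}. \<forall>i<n d. c d t i = U d i + t \<cdot>\<^sub>m dV d i"
    and U_dims: "\<forall>j\<in>{1..d}. core_dims (r (j-1)) (n j) (r j) (U j)"
    and dV_dims: "\<forall>j\<in>{1..d}. core_dims (r (j-1)) (n j) (r j) (dV j)"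
    and m: "m \<in> {1..d}" and i: "i < n m" and a: "a < r (m - 1)" and b: "b < r m"
  shows "c m 0 i $$ (a, b) = U m i $$ (a, b)"
    and "((\<lambda>t. c m t i $$ (a, b)) has_real_derivative dV m i $$ (a, b)) (at 0)"
proof -
  have "c m 0 i $$ (a, b) = U m i $$ (a, b) \<and> ((\<lambda>t. c m t i $$ (a, b)) has_real_derivative dV m i $$ (a, b)) (at 0)"
  proof (cases "m = d")
    case True
    have "U d i \<in> carrier_mat (r (d - 1)) (r d)" "dV d i \<in> carrier_mat (r (d - 1)) (r d)"
      using U_dims dV_dims m i True by (auto simp: core_dims_def)
    then have "c m t i $$ (a, b) = U m i $$ (a, b) + t * dV m i $$ (a, b)" if "t \<in> {-\<epsilon><..<\<epsilon>}" for t
      using last that True i a b by simp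
    moreover have "eventually (\<lambda>t. t \<in> {-\<epsilon><..<\<epsilon>}) (nhds (0::real))"
      using eps by (intro eventually_nhds_in_open) auto
    ultimately have "eventually (\<lambda>t. c m t i $$ (a, b) = U m i $$ (a, b) + t * dV m i $$ (a, b)) (nhds 0)"
      by (auto elim: eventually_mono)
    moreover have "((\<lambda>t. U m i $$ (a, b) + t * dV m i $$ (a, b)) has_real_derivative dV m i $$ (a, b)) (at 0)"
      by (auto intro!: derivative_eq_intros)
    ultimately show ?thesis using DERIV_cong_ev[OF refl _ refl] eventually_nhds_x_imp_x by fastforce
  next
    case False
    then have "isCont (\<lambda>t. c m t i $$ (a, b)) 0" 
      using smooth m i a b eps by (intro C_inf_on_isCont[of "{-\<epsilon><..<\<epsilon>}"]) auto
    moreover have "(\<lambda>t. c m t i $$ (a, b) - U m i $$ (a, b) - t * dV m i $$ (a, b)) \<in> O[at 0](\<lambda>t. t\<^sup>2)"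
      using expansion m i a b False by auto
    ultimately show ?thesis using has_real_derivative_of_bigo_square by blast
  qed
  then show "c m 0 i $$ (a, b) = U m i $$ (a, b)"
    and "((\<lambda>t. c m t i $$ (a, b)) has_real_derivative dV m i $$ (a, b)) (at 0)" by auto
qed

lemma tt_curve_interface_has_derivative:
  fixes c :: "nat \<Rightarrow> real \<Rightarrow> core"
  assumes eps: "\<epsilon> > 0"
    and smooth: "\<forall>j\<in>{1..d}. \<forall>i<n j. \<forall>a<r (j-1). \<forall>b<r j. C_inf_on {-\<epsilon><..<\<epsilon>} (\<lambda>t. c j t i $$ (a,b))"
    and expansion: "\<forall>j\<in>{1..d-1}. \<forall>i<n j. \<forall>a<r (j-1). \<forall>b<r j.
        (\<lambda>t. c j t i $$ (a,b) - U j i $$ (a,b) - t * dV j i $$ (a,b)) \<in> O[at 0](\<lambda>t. t^2)"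
    and last: "\<forall>t\<in>{-\<epsilon><..<\<epsilon>}. \<forall>i<n d. c d t i = U d i + t \<cdot>\<^sub>m dV d i"
    and U_dims: "\<forall>j\<in>{1..d}. core_dims (r (j-1)) (n j) (r j) (U j)"
    and dV_dims: "\<forall>j\<in>{1..d}. core_dims (r (j-1)) (n j) (r j) (dV j)"
    and rd: "r d = 1" and k: "k < d"
  shows "mat_has_derivative (\<lambda>t. XT (\<lambda>m. c m t) n r (d - k) (k + 1)) (VT U dV n r (d - k) (k + 1)) 0"
    and "XT (\<lambda>m. c m 0) n r (d - k) (k + 1) = XT U n r (d - k) (k + 1)"
proof -
  note core = tt_curve_core_derivatives[of \<epsilon> d n r c U dV, OF eps smooth expansion last U_dims dV_dims]
  have kj: "k + 1 + (d - k) = d + 1" using k by simp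
  show "mat_has_derivative (\<lambda>t. XT (\<lambda>m. c m t) n r (d - k) (k + 1)) (VT U dV n r (d - k) (k + 1)) 0"
    by (rule XT_has_derivative[where r = r and d = d, OF rd kj]) (use core k in auto)
  show "XT (\<lambda>m. c m 0) n r (d - k) (k + 1) = XT U n r (d - k) (k + 1)"
    by (rule XT_cong) (use core k in auto)
qed

theorem lemma19:
  fixes d :: nat and n r :: "nat \<Rightarrow> nat"
    and U Ut dV :: "nat \<Rightarrow> core" and R Rinv :: "real mat"
    and c :: "nat \<Rightarrow> real \<Rightarrow> core" and \<epsilon> :: real and k :: nat
  assumes d2: "d \<ge> 2"
    and npos: "\<forall>j\<in>{1..d}. n j > 0"
    and r0: "r 0 = 1" and rd: "r d = 1"
    \<comment> \<open>X = tt d U in M_r, with minimal left-orthogonal decomposition U\<close>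
    and U_dims: "\<forall>j\<in>{1..d}. core_dims (r (j-1)) (n j) (r j) (U j)"
    and U_lo: "\<forall>j\<in>{1..d-1}. left_orth (r (j-1)) (n j) (r j) (U j)"
    and X_Mr: "in_Mr n d r (tt d U)"
    \<comment> \<open>minimal right-orthogonal decomposition Ut of the same X\<close>
    and Ut_dims: "\<forall>j\<in>{1..d}. core_dims (r (j-1)) (n j) (r j) (Ut j)"
    and Ut_ro: "\<forall>j\<in>{2..d}. right_orth (r (j-1)) (n j) (r j) (Ut j)"
    and Ut_X: "\<forall>idx. length idx = d \<and> (\<forall>j<d. idx ! j < n (j+1)) \<longrightarrow> tt d Ut idx = tt d U idx"
    \<comment> \<open>tangent vector cores\<close>
    and dV_dims: "\<forall>j\<in>{1..d}. core_dims (r (j-1)) (n j) (r j) (dV j)"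
    and dV_gauge: "\<forall>j\<in>{1..d-1}. transpose_mat (unfoldL (r (j-1)) (n j) (r j) (dV j))
                      * unfoldL (r (j-1)) (n j) (r j) (U j) = 0\<^sub>m (r j) (r j)"
    \<comment> \<open>k and the invertible R_k with X_{>=k+1} = Xt_{>=k+1} R_k; Rinv is R_k^{-1}\<close>
    and k: "k \<in> {1..d-1}"
    and R_dim: "R \<in> carrier_mat (r k) (r k)" and Rinv_dim: "Rinv \<in> carrier_mat (r k) (r k)"
    and R_inv: "R * Rinv = 1\<^sub>m (r k)" "Rinv * R = 1\<^sub>m (r k)"
    and R_def: "Xge U n r d (k+1) = Xge Ut n r d (k+1) * R"
    \<comment> \<open>the curves\<close>
    and eps: "\<epsilon> > 0"
    and c_smooth: "\<forall>j\<in>{1..d}. \<forall>i<n j. \<forall>a<r (j-1). \<forall>b<r j.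
                      C_inf_on {-\<epsilon><..<\<epsilon>} (\<lambda>t. c j t i $$ (a,b))"
    and c_exp: "\<forall>j\<in>{1..d-1}. \<forall>i<n j. \<forall>a<r (j-1). \<forall>b<r j.
        (\<lambda>t. c j t i $$ (a,b) - U j i $$ (a,b) - t * dV j i $$ (a,b)) \<in> O[at 0](\<lambda>t. t^2)"
    and c_last: "\<forall>t\<in>{-\<epsilon><..<\<epsilon>}. \<forall>i<n d. c d t i = U d i + t \<cdot>\<^sub>m dV d i"
    and c_dims: "\<forall>t\<in>{-\<epsilon><..<\<epsilon>}. \<forall>j\<in>{1..d}. core_dims (r (j-1)) (n j) (r j) (c j t)"
    and c_lo: "\<forall>t\<in>{-\<epsilon><..<\<epsilon>}. \<forall>j\<in>{1..d-1}. left_orth (r (j-1)) (n j) (r j) (c j t)"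
    and c_Mr: "\<forall>t\<in>{-\<epsilon><..<\<epsilon>}. in_Mr n d r (tt d (\<lambda>j. c j t))"
  shows
    "let N = (\<Prod>j\<in>{k+1..d}. n j);
         Xt = Xge Ut n r d (k+1);
         V = Vge U dV n r d (k+1);
         Q = 1\<^sub>m N - Xt * transpose_mat Xt;
         D = Q * V * Rinv * transpose_mat Xt + Xt * transpose_mat Rinv * transpose_mat V * Q
     in \<forall>i<N. \<forall>j<N.
          ((\<lambda>t. orth_proj_rows (flat n d k (tt d (\<lambda>m. c m t))) $$ (i,j))
             has_real_derivative D $$ (i,j)) (at 0)"
proof -
  have k: "1 \<le> k" "k < d" and kj: "k + 1 + (d - k) = d + 1" using k d2 by auto
  define N where "N = (\<Prod>j\<in>{k+1..d}. n j)"
  define Xt where "Xt = Xge Ut n r d (k+1)"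
  define V where "V = Vge U dV n r d (k+1)"
  define Q where "Q = 1\<^sub>m N - Xt * transpose_mat Xt"
  define D where "D = Q * V * Rinv * transpose_mat Xt + Xt * transpose_mat Rinv * transpose_mat V * Q"
  \<comment> \<open>the columns of B t span the row space of the k-th flattening at t, and B 0 = Xt is orthonormal\<close>
  define B where "B t = (XT (\<lambda>m. c m t) n r (d - k) (k + 1))\<^sup>T * Rinv" for t
  note interface = tt_curve_interface_has_derivative[of \<epsilon> d n r c U dV,
      OF eps c_smooth c_exp c_last U_dims dV_dims rd k(2)]
  have "{k + 1..<k + 1 + (d - k)} = {k + 1..d}" using k by auto
  then have Xt: "Xt \<in> carrier_mat N (r k)" and V: "V \<in> carrier_mat N (r k)"
    using XT_carrier[of r d "k + 1" "d - k" Ut n, OF rd kj] VT_carrier[of r d "k + 1" "d - k" U dV n, OF rd kj]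
    unfolding Xt_def V_def Xge_def Vge_def N_def by simp_all
  have BD: "mat_has_derivative B (V * Rinv) 0"
    using mat_has_derivative_mult_const[OF mat_has_derivative_transpose[OF interface(1)], of Rinv] V Rinv_dim
    unfolding B_def V_def Vge_def by simp
  have B0: "B 0 = Xt" using interface(2) R_def R_inv(1) Xt R_dim Rinv_dim unfolding B_def Xt_def Xge_def by simp
  have orth: "(B 0)\<^sup>T * B 0 = 1\<^sub>m (r k)"
    using XT_orthonormal_rows[where r = r and d = d and C = Ut, OF rd kj] Ut_ro k unfolding B0 Xt_def Xge_def by simp
  have "V * Rinv \<in> carrier_mat N (r k)" using V Rinv_dim by simp
  note projector = orth_projector_has_derivative[OF BD this orth]
  have PD: "mat_has_derivative (\<lambda>t. B t * adj_inverse ((B t)\<^sup>T * B t) * (B t)\<^sup>T) D 0"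
    using projector(1) Xt V Rinv_dim unfolding D_def Q_def B0 by (simp add: transpose_mult_dims mat_ring_dims_simps)
  have near: "eventually (\<lambda>t. t \<in> {-\<epsilon><..<\<epsilon>}) (nhds 0)" using eps by (intro eventually_nhds_in_open) auto
  have ev: "eventually (\<lambda>t. orth_proj_rows (flat n d k (tt d (\<lambda>m. c m t)))
      = B t * adj_inverse ((B t)\<^sup>T * B t) * (B t)\<^sup>T) (nhds 0)"
    using projector(2) near
  proof eventually_elim
    case (elim t)
    then show ?case unfolding B_def
      by (intro orth_proj_rows_flat_tt[where r = r and d = d, OF k r0 rd _ _ Rinv_dim R_dim R_inv(2)])
        (use c_dims c_lo k in \<open>auto simp: B_def\<close>)
  qed
  have "D \<in> carrier_mat N N"
    using carrier_matD[OF Xt] carrier_matD[OF V] carrier_matD[OF Rinv_dim]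
    unfolding D_def Q_def by (intro carrier_matI) auto
  then show ?thesis
    unfolding Let_def N_def[symmetric] Xt_def[symmetric] V_def[symmetric] Q_def[symmetric] D_def[symmetric]
    using mat_has_derivative_entry_eventually_eq[OF PD ev] by simp
qed

end
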